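(* Let $Y\in\mathcal{H}^{n\times r}$ be a right canonical matrix for $T$ at $\lambda_0$, and let $V\in\mathcal{H}^{r\times n}$ be such that $T^{-1}-Y\Delta^{-1}V$ has a pole of order $j\ge1$ at $\lambda_0$. Then there exists $\tilde V\in\mathcal{H}^{r\times n}$ such that $T^{-1}-Y\Delta^{-1}\tilde V$ has pole order at most $j-1$ at $\lambda_0$.
   Context: Let $\Omega\subset\mathbb{C}$ be open and $\lambda_0\in\Omega$ fixed. $\mathcal{H}$ denotes the ring of holomorphic functions on $\Omega$, and $\mathcal{H}_0$ the ring of functions holomorphic in some neighborhood of $\lambda_0$. Write $\chi_0(\lambda)=\lambda-\lambda_0$. Throughout, $T\in\mathcal{H}^{n\times n}$ with $\det T$ not identically zero and $\det T(\lambda_0)=0$, and $r=\dim\ker T(\lambda_0)$. There exist $U_L,U_R\in\mathcal{H}_0^{n\times n}$ with $U_L(\lambda_0),U_R(\lambda_0)$ nonsingular and uniquely determined integers $m_1\ge\cdots\ge m_n\ge 0$ (the partial multiplicities) with $U_LTU_R=\mathrm{diag}(\chi_0^{m_1},\dots,\chi_0^{m_n})$; $m_i>0$ exactly for $i\le r$. Set $\Delta=\mathrm{diag}(\chi_0^{m_1},\dots,\chi_0^{m_r})$. Pole order $0$ means holomorphic near $\lambda_0$. A root function for $T$ at $\lambda_0$ is $y\in\mathcal{H}^n$ with $y(\lambda_0)\neq0$ and $T(\lambda_0)y(\lambda_0)=0$; its multiplicity $\nu(y)$ is the order of the zero of $Ty$ at $\lambda_0$. A right canonical matrix for $T$ at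 $\lambda_0$ is $Y\in\mathcal{H}^{n\times r}$ whose columns $y_1,\dots,y_r$ are root functions such that (a) $y_1(\lambda_0),\dots,y_r(\lambda_0)$ are linearly independent, (b) $\sum_{i=1}^r\nu(y_i)=\sum_{i=1}^r m_i$, (c) $\nu(y_1)\ge\cdots\ge\nu(y_r)$. *)

theory Defs
  imports "HOL-Complex_Analysis.Complex_Analysis" "Jordan_Normal_Form.Matrix_Kernel"
begin

definition hol_mat :: "complex set \<Rightarrow> nat \<Rightarrow> nat \<Rightarrow> (complex \<Rightarrow> complex mat) \<Rightarrow> bool" where
  "hol_mat S p q A \<longleftrightarrow> (\<forall>z. A z \<in> carrier_mat p q) \<and>
     (\<forall>i<p. \<forall>j<q. (\<lambda>z. A z $$ (i,j)) holomorphic_on S)"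

definition hol_vec :: "complex set \<Rightarrow> nat \<Rightarrow> (complex \<Rightarrow> complex vec) \<Rightarrow> bool" where
  "hol_vec S p y \<longleftrightarrow> (\<forall>z. y z \<in> carrier_vec p) \<and>
     (\<forall>i<p. (\<lambda>z. vec_index (y z) i) holomorphic_on S)"

definition hol_mat_near :: "complex \<Rightarrow> nat \<Rightarrow> nat \<Rightarrow> (complex \<Rightarrow> complex mat) \<Rightarrow> bool" where
  "hol_mat_near z0 p q A \<longleftrightarrow> (\<exists>e>0. hol_mat (ball z0 e) p q A)"

definition partial_multiplicities ::
    "(complex \<Rightarrow> complex mat) \<Rightarrow> complex \<Rightarrow> nat \<Rightarrow> (nat \<Rightarrow> nat) \<Rightarrow> bool" where
  "partial_multiplicities T z0 n m \<longleftrightarrow>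
     (\<forall>i j. i \<le> j \<longrightarrow> j < n \<longrightarrow> m j \<le> m i) \<and>
     (\<exists>e>0. \<exists>UL UR. hol_mat (ball z0 e) n n UL \<and> hol_mat (ball z0 e) n n UR \<and>
        det (UL z0) \<noteq> 0 \<and> det (UR z0) \<noteq> 0 \<and>
        (\<forall>z\<in>ball z0 e. UL z * T z * UR z = mat_diag n (\<lambda>i. (z - z0) ^ m i)))"

definition Delta_inv :: "complex \<Rightarrow> nat \<Rightarrow> (nat \<Rightarrow> nat) \<Rightarrow> complex \<Rightarrow> complex mat" where
  "Delta_inv z0 r m z = mat_diag r (\<lambda>i. 1 / (z - z0) ^ m i)"

definition root_function ::
    "complex set \<Rightarrow> (complex \<Rightarrow> complex mat) \<Rightarrow> complex \<Rightarrow> nat \<Rightarrow> (complex \<Rightarrow> complex vec) \<Rightarrow> bool" where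
  "root_function \<Omega> T z0 n y \<longleftrightarrow> hol_vec \<Omega> n y \<and> y z0 \<noteq> 0\<^sub>v n \<and> T z0 *\<^sub>v y z0 = 0\<^sub>v n"

definition vec_zero_order :: "nat \<Rightarrow> complex \<Rightarrow> (complex \<Rightarrow> complex vec) \<Rightarrow> nat \<Rightarrow> bool" where
  "vec_zero_order n z0 g k \<longleftrightarrow>
     (\<exists>e>0. \<exists>h. hol_vec (ball z0 e) n h \<and> h z0 \<noteq> 0\<^sub>v n \<and>
        (\<forall>z\<in>ball z0 e. g z = (z - z0) ^ k \<cdot>\<^sub>v h z))"

definition root_mult :: "(complex \<Rightarrow> complex mat) \<Rightarrow> complex \<Rightarrow> nat \<Rightarrow> (complex \<Rightarrow> complex vec) \<Rightarrow> nat" where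
  "root_mult T z0 n y = (THE k. vec_zero_order n z0 (\<lambda>z. T z *\<^sub>v y z) k)"

definition right_canonical ::
    "complex set \<Rightarrow> (complex \<Rightarrow> complex mat) \<Rightarrow> complex \<Rightarrow> nat \<Rightarrow> (nat \<Rightarrow> nat)
       \<Rightarrow> (complex \<Rightarrow> complex mat) \<Rightarrow> bool" where
  "right_canonical \<Omega> T z0 n m Y \<longleftrightarrow>
     (let r = kernel_dim (T z0); nu = (\<lambda>i. root_mult T z0 n (\<lambda>z. col (Y z) i)) in
      hol_mat \<Omega> n r Y \<and>
      (\<forall>i<r. root_function \<Omega> T z0 n (\<lambda>z. col (Y z) i)) \<and>
      (\<forall>c\<in>carrier_vec r. Y z0 *\<^sub>v c = 0\<^sub>v n \<longrightarrow> c = 0\<^sub>v r) \<and>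
      (\<Sum>i<r. nu i) = (\<Sum>i<r. m i) \<and>
      (\<forall>i j. i \<le> j \<longrightarrow> j < r \<longrightarrow> nu j \<le> nu i))"

definition pole_order_le :: "nat \<Rightarrow> complex \<Rightarrow> (complex \<Rightarrow> complex mat) \<Rightarrow> nat \<Rightarrow> bool" where
  "pole_order_le n z0 F k \<longleftrightarrow>
     (\<exists>e>0. \<exists>G. hol_mat (ball z0 e) n n G \<and>
        (\<forall>z\<in>ball z0 e - {z0}. (z - z0) ^ k \<cdot>\<^sub>m F z = G z))"

definition pole_order_eq :: "nat \<Rightarrow> complex \<Rightarrow> (complex \<Rightarrow> complex mat) \<Rightarrow> nat \<Rightarrow> bool" where
  "pole_order_eq n z0 F k \<longleftrightarrow> pole_order_le n z0 F k \<and> (k > 0 \<longrightarrow> \<not> pole_order_le n z0 F (k - 1))"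

definition resid_fun :: "(complex \<Rightarrow> complex mat) \<Rightarrow> complex \<Rightarrow> nat \<Rightarrow> (nat \<Rightarrow> nat)
    \<Rightarrow> (complex \<Rightarrow> complex mat) \<Rightarrow> (complex \<Rightarrow> complex mat) \<Rightarrow> complex \<Rightarrow> complex mat" where
  "resid_fun T z0 r m Y V z = the (mat_inverse (T z)) - Y z * Delta_inv z0 r m z * V z"

end

theory Submission
  imports Defs "Jordan_Normal_Form.Jordan_Normal_Form_Uniqueness"
begin

text \<open>
  Near z0 write U_L T U_R = D = diag((z-z0)^m_i) with U_L, U_R invertible. The columns of a right
  canonical matrix factor as T Y = H diag((z-z0)^nu_i) with nu_i their multiplicities, so
  D (U_R^-1 Y) = U_L H diag((z-z0)^nu_i): the entry (k,i) of U_R^-1(z0) Y(z0) vanishes whenever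
  m_k < nu_i. Since the columns of Y(z0) are independent, this zero pattern forces nu_i \<le> m_i,
  and equal sums give nu = m.

  If (z-z0)^j (T^-1 - Y Delta^-1 V) extends to a holomorphic G, then
  U_R^-1 G = (z-z0)^j D^-1 (U_L - U_L H V), so the rows k of U_R^-1(z0) G(z0) with m_k < j vanish.
  The same block structure then solves Y(z0) C = G(z0) with C vanishing in the rows i with m_i < j,
  and V + diag((z-z0)^(m_i - j)) C subtracts (z-z0)^-j Y C, which removes the leading Laurent
  coefficient G(z0) of the pole.
\<close>

lemma hol_matD:
  "hol_mat S p q A \<Longrightarrow> A z \<in> carrier_mat p q"
  "hol_mat S p q A \<Longrightarrow> i < p \<Longrightarrow> j < q \<Longrightarrow> (\<lambda>z. A z $$ (i,j)) holomorphic_on S"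
  unfolding hol_mat_def by auto

lemma hol_matI:
  "(\<And>z. A z \<in> carrier_mat p q) \<Longrightarrow> (\<And>i j. i < p \<Longrightarrow> j < q \<Longrightarrow> (\<lambda>z. A z $$ (i,j)) holomorphic_on S)
    \<Longrightarrow> hol_mat S p q A"
  unfolding hol_mat_def by auto

lemma hol_mat_subset: "hol_mat S p q A \<Longrightarrow> T \<subseteq> S \<Longrightarrow> hol_mat T p q A"
  unfolding hol_mat_def using holomorphic_on_subset by blast

lemma hol_mat_mat:
  assumes "\<And>i j. i < p \<Longrightarrow> j < q \<Longrightarrow> (\<lambda>z. f z i j) holomorphic_on S"
  shows "hol_mat S p q (\<lambda>z. mat p q (\<lambda>(i,j). f z i j))"
  using assms by (intro hol_matI) auto

lemma hol_mat_const: "C \<in> carrier_mat p q \<Longrightarrow> hol_mat S p q (\<lambda>z. C)"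
  by (intro hol_matI) auto

lemma hol_mat_mult:
  assumes A: "hol_mat S p q A" and B: "hol_mat S q t B"
  shows "hol_mat S p t (\<lambda>z. A z * B z)"
proof (rule hol_matI)
  fix z show "A z * B z \<in> carrier_mat p t"
    by (rule mult_carrier_mat[OF hol_matD(1)[OF A] hol_matD(1)[OF B]])
next
  fix i j assume ij: "i < p" "j < t"
  have eq: "(A z * B z) $$ (i,j) = (\<Sum>k = 0..<q. A z $$ (i,k) * B z $$ (k,j))" for z
    using hol_matD(1)[OF A, of z] hol_matD(1)[OF B, of z] ij
    by (auto simp: scalar_prod_def intro!: sum.cong)
  show "(\<lambda>z. (A z * B z) $$ (i,j)) holomorphic_on S"
    unfolding eq
    by (intro holomorphic_on_sum holomorphic_on_mult hol_matD(2)[OF A] hol_matD(2)[OF B]) (use ij in auto)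
qed

lemma hol_mat_add:
  assumes A: "hol_mat S p q A" and B: "hol_mat S p q B"
  shows "hol_mat S p q (\<lambda>z. A z + B z)"
proof (rule hol_matI)
  fix z show "A z + B z \<in> carrier_mat p q" using hol_matD(1)[OF A] hol_matD(1)[OF B] by auto
next
  fix i j assume ij: "i < p" "j < q"
  have eq: "(A z + B z) $$ (i,j) = A z $$ (i,j) + B z $$ (i,j)" for z
    using hol_matD(1)[OF A, of z] hol_matD(1)[OF B, of z] ij by auto
  show "(\<lambda>z. (A z + B z) $$ (i,j)) holomorphic_on S"
    unfolding eq by (intro holomorphic_on_add hol_matD(2)[OF A] hol_matD(2)[OF B] ij)
qed

lemma hol_mat_diff:
  assumes A: "hol_mat S p q A" and B: "hol_mat S p q B"
  shows "hol_mat S p q (\<lambda>z. A z - B z)"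
proof (rule hol_matI)
  fix z show "A z - B z \<in> carrier_mat p q" by (rule minus_carrier_mat[OF hol_matD(1)[OF B]])
next
  fix i j assume ij: "i < p" "j < q"
  have eq: "(A z - B z) $$ (i,j) = A z $$ (i,j) - B z $$ (i,j)" for z
    using hol_matD(1)[OF A, of z] hol_matD(1)[OF B, of z] ij by auto
  show "(\<lambda>z. (A z - B z) $$ (i,j)) holomorphic_on S"
    unfolding eq by (intro holomorphic_on_diff hol_matD(2)[OF A] hol_matD(2)[OF B] ij)
qed

lemma hol_mat_smult:
  assumes A: "hol_mat S p q A" and f: "f holomorphic_on S"
  shows "hol_mat S p q (\<lambda>z. f z \<cdot>\<^sub>m A z)"
proof (rule hol_matI)
  fix z show "f z \<cdot>\<^sub>m A z \<in> carrier_mat p q" using hol_matD(1)[OF A] by auto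
next
  fix i j assume ij: "i < p" "j < q"
  have eq: "(f z \<cdot>\<^sub>m A z) $$ (i,j) = f z * A z $$ (i,j)" for z
    using hol_matD(1)[OF A, of z] ij by auto
  show "(\<lambda>z. (f z \<cdot>\<^sub>m A z) $$ (i,j)) holomorphic_on S"
    unfolding eq by (intro holomorphic_on_mult f hol_matD(2)[OF A] ij)
qed

lemma holomorphic_on_det:
  assumes A: "hol_mat S n n A"
  shows "(\<lambda>z. det (A z)) holomorphic_on S"
proof -
  have eq: "det (A z) = (\<Sum>p | p permutes {0..<n}. of_int (sign p) * (\<Prod>i = 0..<n. A z $$ (i, p i)))" for z
    using hol_matD(1)[OF A, of z] by (simp add: det_def)
  show ?thesis unfolding eq
  proof (intro holomorphic_on_sum holomorphic_on_mult holomorphic_on_const holomorphic_on_prod)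
    fix p i assume "p \<in> {p. p permutes {0..<n}}" "i \<in> {0..<n}"
    then have "p i < n" by (auto simp: permutes_in_image)
    then show "(\<lambda>z. A z $$ (i, p i)) holomorphic_on S" using \<open>i \<in> _\<close> by (intro hol_matD(2)[OF A]) auto
  qed
qed

lemma hol_mat_delete:
  assumes A: "hol_mat S n n A" and "i < n" "j < n"
  shows "hol_mat S (n-1) (n-1) (\<lambda>z. mat_delete (A z) i j)"
proof (rule hol_matI)
  fix z show "mat_delete (A z) i j \<in> carrier_mat (n-1) (n-1)" using hol_matD(1)[OF A, of z]
    by (auto simp: mat_delete_def)
next
  fix a b assume ab: "a < n - 1" "b < n - 1"
  have eq: "mat_delete (A z) i j $$ (a,b) = A z $$ (if a < i then a else Suc a, if b < j then b else Suc b)" for z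
    using hol_matD(1)[OF A, of z] ab by (auto simp: mat_delete_def)
  show "(\<lambda>z. mat_delete (A z) i j $$ (a,b)) holomorphic_on S"
    unfolding eq by (rule hol_matD(2)[OF A]) (use ab in auto)
qed

lemma hol_mat_adj:
  assumes A: "hol_mat S n n A"
  shows "hol_mat S n n (\<lambda>z. adj_mat (A z))"
proof (rule hol_matI)
  fix z show "adj_mat (A z) \<in> carrier_mat n n" using adj_mat(1)[OF hol_matD(1)[OF A]] by auto
next
  fix i j assume ij: "i < n" "j < n"
  have eq: "adj_mat (A z) $$ (i,j) = (- 1) ^ (j + i) * det (mat_delete (A z) j i)" for z
    using hol_matD(1)[OF A, of z] ij by (auto simp: adj_mat_def cofactor_def)
  show "(\<lambda>z. adj_mat (A z) $$ (i,j)) holomorphic_on S"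
    unfolding eq
    by (intro holomorphic_on_mult holomorphic_on_const holomorphic_on_det[of S "n-1"] hol_mat_delete[OF A] ij)
qed

lemma smult_smult_mat: "a \<cdot>\<^sub>m (b \<cdot>\<^sub>m A) = (a * b :: 'a :: comm_ring_1) \<cdot>\<^sub>m A"
  by (rule eq_matI) auto

lemma one_smult_mat: "(1 :: 'a :: comm_ring_1) \<cdot>\<^sub>m A = A"
  by (rule eq_matI) auto

lemma hol_mat_inverse:
  assumes A: "hol_mat S n n A" and nz: "\<And>z. z \<in> S \<Longrightarrow> det (A z) \<noteq> 0"
  shows "hol_mat S n n (\<lambda>z. (1 / det (A z)) \<cdot>\<^sub>m adj_mat (A z))"
    "\<And>z. z \<in> S \<Longrightarrow> A z * ((1 / det (A z)) \<cdot>\<^sub>m adj_mat (A z)) = 1\<^sub>m n"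
    "\<And>z. z \<in> S \<Longrightarrow> ((1 / det (A z)) \<cdot>\<^sub>m adj_mat (A z)) * A z = 1\<^sub>m n"
proof -
  show "hol_mat S n n (\<lambda>z. (1 / det (A z)) \<cdot>\<^sub>m adj_mat (A z))"
    by (intro hol_mat_smult hol_mat_adj A holomorphic_on_divide holomorphic_on_const holomorphic_on_det[OF A] nz)
  fix z assume z: "z \<in> S"
  note c = hol_matD(1)[OF A, of z]
  show "A z * ((1 / det (A z)) \<cdot>\<^sub>m adj_mat (A z)) = 1\<^sub>m n"
    using c nz[OF z] adj_mat[OF c]
    by (simp add: mult_smult_distrib[OF c adj_mat(1)[OF c]] smult_smult_mat one_smult_mat)
  show "((1 / det (A z)) \<cdot>\<^sub>m adj_mat (A z)) * A z = 1\<^sub>m n"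
    using c nz[OF z] adj_mat[OF c]
    by (simp add: mult_smult_assoc_mat[OF adj_mat(1)[OF c] c] smult_smult_mat one_smult_mat)
qed

lemma hol_vecD:
  "hol_vec S p y \<Longrightarrow> y z \<in> carrier_vec p"
  "hol_vec S p y \<Longrightarrow> i < p \<Longrightarrow> (\<lambda>z. y z $ i) holomorphic_on S"
  unfolding hol_vec_def by auto

lemma hol_vec_col:
  assumes A: "hol_mat S p q A" and i: "i < q"
  shows "hol_vec S p (\<lambda>z. col (A z) i)"
  unfolding hol_vec_def
proof (intro conjI allI impI)
  fix z show "col (A z) i \<in> carrier_vec p" using hol_matD(1)[OF A, of z] by auto
next
  fix a assume a: "a < p"
  have "col (A z) i $ a = A z $$ (a,i)" for z
    using hol_matD(1)[OF A, of z] a i by auto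
  then show "(\<lambda>z. col (A z) i $ a) holomorphic_on S" using hol_matD(2)[OF A a i] by simp
qed

lemma hol_vec_mult_mat_vec:
  assumes A: "hol_mat S p q A" and y: "hol_vec S q y"
  shows "hol_vec S p (\<lambda>z. A z *\<^sub>v y z)"
  unfolding hol_vec_def
proof (intro conjI allI impI)
  fix z show "A z *\<^sub>v y z \<in> carrier_vec p"
    by (rule mult_mat_vec_carrier[OF hol_matD(1)[OF A] hol_vecD(1)[OF y]])
next
  fix i assume i: "i < p"
  have eq: "(A z *\<^sub>v y z) $ i = (\<Sum>k = 0..<q. A z $$ (i,k) * y z $ k)" for z
    using hol_matD(1)[OF A, of z] hol_vecD(1)[OF y, of z] i
    by (auto simp: scalar_prod_def intro!: sum.cong)
  show "(\<lambda>z. (A z *\<^sub>v y z) $ i) holomorphic_on S"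
    unfolding eq
    by (intro holomorphic_on_sum holomorphic_on_mult hol_matD(2)[OF A] hol_vecD(2)[OF y]) (use i in auto)
qed

lemma holomorphic_nonzero_near:
  fixes f :: "complex \<Rightarrow> complex"
  assumes "f holomorphic_on S" "open S" "z0 \<in> S" "f z0 \<noteq> 0"
  obtains d where "d > 0" "\<And>z. z \<in> ball z0 d \<Longrightarrow> f z \<noteq> 0"
proof -
  have "continuous (at z0) f"
    using assms holomorphic_on_imp_continuous_on continuous_on_eq_continuous_at by blast
  from continuous_at_avoid[OF this assms(4)] that show ?thesis by (auto simp: dist_commute)
qed

lemma vanishes_at_center_if_power_factor:
  fixes f g :: "complex \<Rightarrow> complex"
  assumes "open S" "z0 \<in> S" "continuous_on S f" "continuous_on S g" "0 < d"
    and "\<And>z. z \<in> S \<Longrightarrow> z \<noteq> z0 \<Longrightarrow> f z = (z - z0) ^ d * g z"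
  shows "f z0 = 0"
proof -
  have f: "(f \<longlongrightarrow> f z0) (at z0)" and g: "(g \<longlongrightarrow> g z0) (at z0)"
    using assms(1-4) continuous_on_eq_continuous_at isContD by blast+
  have "((\<lambda>z. (z - z0) ^ d * g z) \<longlongrightarrow> (z0 - z0) ^ d * g z0) (at z0)"
    by (intro tendsto_intros g)
  moreover have "eventually (\<lambda>z. (z - z0) ^ d * g z = f z) (at z0)"
    using assms(1,2,6) by (auto simp: eventually_at_topological)
  ultimately have "(f \<longlongrightarrow> 0) (at z0)" using \<open>0 < d\<close> by (simp add: Lim_transform_eventually zero_power)
  from tendsto_unique[OF at_neq_bot f this] show ?thesis .
qed

lemma holomorphic_zero_factor:
  fixes f :: "complex \<Rightarrow> complex"
  assumes hol: "f holomorphic_on ball z0 e" and nz: "\<exists>z\<in>ball z0 e. f z \<noteq> 0"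
  obtains k r g where "0 < r" "r \<le> e" "g holomorphic_on ball z0 r" "g z0 \<noteq> 0"
    "\<And>w. w \<in> ball z0 r \<Longrightarrow> f w = (w - z0) ^ k * g w"
proof -
  have "0 < e" using nz by (metis ball_eq_empty empty_iff linorder_not_less)
  show ?thesis
  proof (cases "f z0 = 0")
    case False
    with hol \<open>0 < e\<close> show ?thesis by (intro that[of e f 0]) auto
  next
    case True
    have nc: "\<not> f constant_on ball z0 e"
    proof
      assume "f constant_on ball z0 e"
      then obtain c where "\<And>z. z \<in> ball z0 e \<Longrightarrow> f z = c" by (auto simp: constant_on_def)
      with nz True \<open>0 < e\<close> show False by (metis centre_in_ball)
    qed
    obtain g r k where "0 < r" "ball z0 r \<subseteq> ball z0 e" "g holomorphic_on ball z0 r"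
      "\<And>w. w \<in> ball z0 r \<Longrightarrow> f w = (w - z0) ^ k * g w" "\<And>w. w \<in> ball z0 r \<Longrightarrow> g w \<noteq> 0"
      using holomorphic_factor_zero_nonconstant[OF hol open_ball connected_ball _ True nc] \<open>0 < e\<close>
      by (metis centre_in_ball)
    then show ?thesis by (intro that[of r g k]) (auto simp: ball_subset_ball_iff)
  qed
qed

lemma vec_nonzero_component:
  fixes v :: "'a :: zero vec"
  assumes "v \<in> carrier_vec n" "v \<noteq> 0\<^sub>v n"
  obtains i where "i < n" "v $ i \<noteq> 0"
  using assms by (metis eq_vecI carrier_vecD index_zero_vec)

lemma vec_zero_order_unique:
  assumes "vec_zero_order n z0 g k" "vec_zero_order n z0 g k'"
  shows "k = k'"
proof -
  have False if H: "vec_zero_order n z0 g k" "vec_zero_order n z0 g k'" and "k < k'" for k k'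
  proof -
    obtain e h where e: "e > 0" "hol_vec (ball z0 e) n h" "h z0 \<noteq> 0\<^sub>v n"
      "\<And>z. z \<in> ball z0 e \<Longrightarrow> g z = (z - z0) ^ k \<cdot>\<^sub>v h z"
      using H(1) unfolding vec_zero_order_def by blast
    obtain e' h' where e': "e' > 0" "hol_vec (ball z0 e') n h'"
      "\<And>z. z \<in> ball z0 e' \<Longrightarrow> g z = (z - z0) ^ k' \<cdot>\<^sub>v h' z"
      using H(2) unfolding vec_zero_order_def by blast
    obtain i where i: "i < n" "h z0 $ i \<noteq> 0"
      using vec_nonzero_component[OF hol_vecD(1)[OF e(2)] e(3)] .
    define S where "S = ball z0 (min e e')"
    have "h z0 $ i = 0"
    proof (rule vanishes_at_center_if_power_factor[of S z0 _ "\<lambda>z. h' z $ i" "k' - k"])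
      show "continuous_on S (\<lambda>z. h z $ i)" "continuous_on S (\<lambda>z. h' z $ i)"
        using hol_vecD(2)[OF e(2) i(1)] hol_vecD(2)[OF e'(2) i(1)] unfolding S_def
        by (meson holomorphic_on_imp_continuous_on holomorphic_on_subset min.cobounded1 min.cobounded2 subset_ball)+
      fix z assume z: "z \<in> S" "z \<noteq> z0"
      have "(z - z0) ^ k * h z $ i = (z - z0) ^ k' * h' z $ i"
        using e(4)[of z] e'(3)[of z] z hol_vecD(1)[OF e(2), of z] hol_vecD(1)[OF e'(2), of z] i
        by (auto simp: S_def) (metis carrier_vecD index_smult_vec(1))
      also have "(z - z0) ^ k' = (z - z0) ^ k * (z - z0) ^ (k' - k)"
        using \<open>k < k'\<close> by (simp add: power_add[symmetric])
      finally show "h z $ i = (z - z0) ^ (k' - k) * h' z $ i" using z by simp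
    qed (use \<open>k < k'\<close> e e' in \<open>auto simp: S_def\<close>)
    with i show False by simp
  qed
  then show ?thesis using assms by (metis linorder_neqE_nat)
qed

lemma vec_zero_order_of_component_factors:
  fixes g :: "complex \<Rightarrow> complex vec" and G :: "nat \<Rightarrow> complex \<Rightarrow> complex"
  assumes g: "\<And>z. g z \<in> carrier_vec n" and r: "0 < r"
    and NZ: "NZ \<subseteq> {..<n}" and i1: "i1 \<in> NZ" and k: "\<And>i. i \<in> NZ \<Longrightarrow> K i1 \<le> K i"
    and G: "\<And>i. i \<in> NZ \<Longrightarrow> G i holomorphic_on ball z0 r \<and> G i z0 \<noteq> 0"
    and factor: "\<And>i z. i \<in> NZ \<Longrightarrow> z \<in> ball z0 r \<Longrightarrow> g z $ i = (z - z0) ^ K i * G i z"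
    and zero: "\<And>i z. i < n \<Longrightarrow> i \<notin> NZ \<Longrightarrow> z \<in> ball z0 r \<Longrightarrow> g z $ i = 0"
  shows "vec_zero_order n z0 g (K i1)"
proof -
  define h where "h = (\<lambda>z. vec n (\<lambda>i. if i \<in> NZ then (z - z0) ^ (K i - K i1) * G i z else 0))"
  show ?thesis unfolding vec_zero_order_def
  proof (intro exI[of _ r] exI[of _ h] conjI ballI)
    show "hol_vec (ball z0 r) n h" unfolding hol_vec_def
    proof (intro conjI allI impI)
      fix i assume "i < n"
      then show "(\<lambda>z. h z $ i) holomorphic_on ball z0 r"
        using G by (cases "i \<in> NZ") (auto simp: h_def intro!: holomorphic_intros)
    qed (auto simp: h_def)
    show "h z0 \<noteq> 0\<^sub>v n"
    proof
      assume "h z0 = 0\<^sub>v n"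
      then have "h z0 $ i1 = 0" using i1 NZ by auto
      then show False using i1 NZ G[OF i1] by (auto simp: h_def)
    qed
    fix z assume z: "z \<in> ball z0 r"
    show "g z = (z - z0) ^ K i1 \<cdot>\<^sub>v h z"
    proof (rule eq_vecI)
      fix i assume "i < dim_vec ((z - z0) ^ K i1 \<cdot>\<^sub>v h z)"
      then have i: "i < n" by (auto simp: h_def)
      show "g z $ i = ((z - z0) ^ K i1 \<cdot>\<^sub>v h z) $ i"
      proof (cases "i \<in> NZ")
        case True
        have "(z - z0) ^ K i = (z - z0) ^ K i1 * (z - z0) ^ (K i - K i1)"
          using k[OF True] by (simp add: power_add[symmetric])
        then show ?thesis using factor[OF True z] True i by (simp add: h_def)
      qed (use zero i z in \<open>simp add: h_def\<close>)
    qed (use g[of z] in \<open>auto simp: h_def\<close>)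
  qed (rule r)
qed

lemma vec_zero_order_exists:
  assumes hol: "hol_vec (ball z0 e) n g" and z1: "z1 \<in> ball z0 e" "g z1 \<noteq> 0\<^sub>v n"
  shows "\<exists>k. vec_zero_order n z0 g k"
proof -
  define NZ where "NZ = {i. i < n \<and> (\<exists>z\<in>ball z0 e. g z $ i \<noteq> 0)}"
  obtain i0 where "i0 < n" "g z1 $ i0 \<noteq> 0" using vec_nonzero_component[OF hol_vecD(1)[OF hol] z1(2)] .
  then have i0: "i0 \<in> NZ" using z1 by (auto simp: NZ_def)
  have finNZ: "finite NZ" by (auto simp: NZ_def)
  have "\<forall>i\<in>NZ. \<exists>k r G. 0 < r \<and> r \<le> e \<and> G holomorphic_on ball z0 r \<and> G z0 \<noteq> 0 \<and>
     (\<forall>w\<in>ball z0 r. g w $ i = (w - z0) ^ k * G w)"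
    by (auto simp: NZ_def elim!: holomorphic_zero_factor[OF hol_vecD(2)[OF hol]])
  then obtain K R G where KRG: "\<And>i. i \<in> NZ \<Longrightarrow> 0 < R i \<and> R i \<le> e \<and> G i holomorphic_on ball z0 (R i) \<and>
     G i z0 \<noteq> 0 \<and> (\<forall>w\<in>ball z0 (R i). g w $ i = (w - z0) ^ K i * G i w)"
    by metis
  define r where "r = Min (R ` NZ)"
  have r_le: "\<And>i. i \<in> NZ \<Longrightarrow> r \<le> R i" using finNZ unfolding r_def by simp
  have r_pos: "r > 0" unfolding r_def using finNZ i0 KRG by (subst Min_gr_iff) auto
  have "Min (K ` NZ) \<in> K ` NZ" using finNZ i0 by (intro Min_in) auto
  then obtain i1 where i1: "i1 \<in> NZ" "K i1 = Min (K ` NZ)" by auto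
  have "vec_zero_order n z0 g (K i1)"
  proof (rule vec_zero_order_of_component_factors[OF hol_vecD(1)[OF hol] r_pos _ i1(1)])
    show "NZ \<subseteq> {..<n}" by (auto simp: NZ_def)
    show "K i1 \<le> K i" if "i \<in> NZ" for i using that finNZ i1(2) by simp
    show "G i holomorphic_on ball z0 r \<and> G i z0 \<noteq> 0" if "i \<in> NZ" for i
      using KRG[OF that] r_le[OF that] holomorphic_on_subset subset_ball by blast
    show "g z $ i = (z - z0) ^ K i * G i z" if "i \<in> NZ" "z \<in> ball z0 r" for i z
      using KRG[OF that(1)] r_le[OF that(1)] that(2) by auto
    show "g z $ i = 0" if "i < n" "i \<notin> NZ" "z \<in> ball z0 r" for i z
      using that r_le[OF i0] KRG[OF i0] by (auto simp: NZ_def)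
  qed
  then show ?thesis ..
qed

lemma root_mult_vec_zero_order:
  assumes "hol_vec (ball z0 e) n (\<lambda>z. T z *\<^sub>v y z)" "z1 \<in> ball z0 e" "T z1 *\<^sub>v y z1 \<noteq> 0\<^sub>v n"
  shows "vec_zero_order n z0 (\<lambda>z. T z *\<^sub>v y z) (root_mult T z0 n y)"
proof -
  obtain k where k: "vec_zero_order n z0 (\<lambda>z. T z *\<^sub>v y z) k"
    using vec_zero_order_exists[OF assms] by blast
  then have "root_mult T z0 n y = k"
    unfolding root_mult_def using vec_zero_order_unique by blast
  with k show ?thesis by simp
qed

lemma hol_mat_factor_columns:
  assumes A: "\<And>z. A z \<in> carrier_mat n r"
    and ord: "\<And>i. i < r \<Longrightarrow> vec_zero_order n z0 (\<lambda>z. col (A z) i) (p i)"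
  obtains d H where "0 < d" "hol_mat (ball z0 d) n r H"
    "\<And>z. z \<in> ball z0 d \<Longrightarrow> A z = H z * mat_diag r (\<lambda>i. (z - z0) ^ p i)"
proof -
  have "\<forall>i\<in>{..<r}. \<exists>d h. 0 < d \<and> hol_vec (ball z0 d) n h \<and>
      (\<forall>z\<in>ball z0 d. col (A z) i = (z - z0) ^ p i \<cdot>\<^sub>v h z)"
    using ord unfolding vec_zero_order_def by blast
  then obtain E HH where EH: "\<And>i. i < r \<Longrightarrow> 0 < E i \<and> hol_vec (ball z0 (E i)) n (HH i) \<and>
      (\<forall>z\<in>ball z0 (E i). col (A z) i = (z - z0) ^ p i \<cdot>\<^sub>v HH i z)"
    by (metis lessThan_iff)
  define d where "d = Min (insert 1 (E ` {..<r}))"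
  have d: "0 < d" using EH unfolding d_def by (subst Min_gr_iff) auto
  have dE: "ball z0 d \<subseteq> ball z0 (E i)" if "i < r" for i
    using that unfolding d_def by (intro subset_ball Min_le) auto
  define H where "H z = mat n r (\<lambda>(l,i). HH i z $ l)" for z
  show ?thesis
  proof (rule that[OF d])
    show "hol_mat (ball z0 d) n r H"
      unfolding H_def
    proof (rule hol_mat_mat)
      fix l i assume li: "l < n" "i < r"
      then have "hol_vec (ball z0 (E i)) n (HH i)" using EH by blast
      from holomorphic_on_subset[OF hol_vecD(2)[OF this li(1)] dE[OF li(2)]]
      show "(\<lambda>z. HH i z $ l) holomorphic_on ball z0 d" .
    qed
    fix z assume z: "z \<in> ball z0 d"
    show "A z = H z * mat_diag r (\<lambda>i. (z - z0) ^ p i)"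
    proof (rule eq_matI)
      fix l i assume "l < dim_row (H z * mat_diag r (\<lambda>i. (z - z0) ^ p i))"
        "i < dim_col (H z * mat_diag r (\<lambda>i. (z - z0) ^ p i))"
      then have li: "l < n" "i < r" by (auto simp: H_def mat_diag_def)
      have "A z $$ (l,i) = col (A z) i $ l" using A[of z] li by simp
      also have "\<dots> = (z - z0) ^ p i * HH i z $ l"
      proof -
        have "z \<in> ball z0 (E i)" using dE[OF li(2)] z by auto
        with EH[OF li(2)] have "col (A z) i = (z - z0) ^ p i \<cdot>\<^sub>v HH i z"
          and "HH i z \<in> carrier_vec n" using hol_vecD(1) by blast+
        with li show ?thesis by simp
      qed
      finally show "A z $$ (l,i) = (H z * mat_diag r (\<lambda>i. (z - z0) ^ p i)) $$ (l,i)"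
        using li by (subst mat_diag_mult_right[of _ n r]) (auto simp: H_def)
    qed (use A in \<open>auto simp: H_def mat_diag_def\<close>)
  qed
qed

lemma inverse_mat_exists:
  fixes A :: "complex mat"
  assumes A: "A \<in> carrier_mat n n" and d: "det A \<noteq> 0"
  obtains B where "B \<in> carrier_mat n n" "A * B = 1\<^sub>m n" "B * A = 1\<^sub>m n"
  using hol_mat_inverse[OF hol_mat_const[OF A, of "{0}"]] d adj_mat(1)[OF A]
  by (intro that[of "(1 / det A) \<cdot>\<^sub>m adj_mat A"]) auto

lemma mat_inverse_the:
  fixes A :: "complex mat"
  assumes A: "A \<in> carrier_mat n n" and d: "det A \<noteq> 0"
  shows "the (mat_inverse A) \<in> carrier_mat n n" "A * the (mat_inverse A) = 1\<^sub>m n"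
    "the (mat_inverse A) * A = 1\<^sub>m n"
proof -
  have "A \<in> Units (ring_mat TYPE(complex) n ())" by (rule det_non_zero_imp_unit[OF A d])
  then have "mat_inverse A \<noteq> None" using mat_inverse(1)[OF A, of "()"] by blast
  then obtain B where "mat_inverse A = Some B" by blast
  with mat_inverse(2)[OF A this]
  show "the (mat_inverse A) \<in> carrier_mat n n" "A * the (mat_inverse A) = 1\<^sub>m n"
    "the (mat_inverse A) * A = 1\<^sub>m n"
    by auto
qed

lemma Delta_inv_mult_diag:
  assumes "z \<noteq> z0"
  shows "Delta_inv z0 k p z * mat_diag k (\<lambda>i. (z - z0) ^ p i) = 1\<^sub>m k"
    "mat_diag k (\<lambda>i. (z - z0) ^ p i) * Delta_inv z0 k p z = 1\<^sub>m k"
  unfolding Delta_inv_def mat_diag_diag using assms by (auto intro!: eq_matI simp: mat_diag_def)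

lemma downward_closed_eq_lessThan:
  fixes S :: "nat set"
  assumes "\<And>i j. i \<le> j \<Longrightarrow> j \<in> S \<Longrightarrow> i \<in> S" and "finite S"
  shows "S = {..<card S}"
proof (cases "S = {}")
  case False
  have "S = {..<Suc (Max S)}"
  proof
    show "S \<subseteq> {..<Suc (Max S)}" using assms(2) by (auto simp: less_Suc_eq_le)
    show "{..<Suc (Max S)} \<subseteq> S"
      using assms(1)[OF _ Max_in[OF assms(2) False]] by (auto simp: less_Suc_eq_le)
  qed
  then show ?thesis by (metis card_lessThan)
qed simp

lemma antimono_threshold_eq_lessThan:
  fixes m :: "nat \<Rightarrow> nat"
  assumes antimono: "\<And>i j. i \<le> j \<Longrightarrow> j < n \<Longrightarrow> m j \<le> m i"
  shows "{k. k < n \<and> t \<le> m k} = {..<card {k. k < n \<and> t \<le> m k}}"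
proof (rule downward_closed_eq_lessThan)
  show "finite {k. k < n \<and> t \<le> m k}" by (rule finite_subset[of _ "{..<n}"]) auto
  fix i j assume "i \<le> j" "j \<in> {k. k < n \<and> t \<le> m k}"
  then show "i \<in> {k. k < n \<and> t \<le> m k}" using antimono[of i j] by auto
qed

lemma kernel_dim_diag_zero_one:
  assumes "q \<le> n"
  shows "kernel.dim n (mat_diag n (\<lambda>i. if i < q then 0 else 1 :: complex)) = q"
proof -
  have n: "q + (n - q) = n" using assms by simp
  have "mat_diag n (\<lambda>i. if i < q then 0 else 1 :: complex)
      = four_block_mat (0\<^sub>m q q) (0\<^sub>m q (n - q)) (0\<^sub>m (n - q) q) (1\<^sub>m (n - q))" (is "?D = ?F")
  proof (rule eq_matI)
    fix i j assume "i < dim_row ?F" "j < dim_col ?F"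
    then have "i < n" "j < n" using assms by auto
    then show "?D $$ (i,j) = ?F $$ (i,j)"
      using assms by (cases "i < q"; cases "j < q") (auto simp: four_block_mat_def Let_def mat_diag_def)
  qed (simp_all add: n mat_diag_def)
  from kernel_four_block_0_mat[OF this zero_carrier_mat one_carrier_mat, unfolded n]
  have "kernel.dim n (mat_diag n (\<lambda>i. if i < q then 0 else 1 :: complex))
      = kernel.dim q (0\<^sub>m q q :: complex mat) + kernel.dim (n - q) (1\<^sub>m (n - q) :: complex mat)" .
  also have "0\<^sub>m q q = (jordan_block q (0 :: complex)) ^\<^sub>m q"
    by (intro eq_matI) (auto simp: jordan_block_zero_pow)
  finally show ?thesis
    using dim_kernel_zero_jordan_block_pow[of q q, where 'a = complex]
      kernel_one_mat(1)[of "n - q", where 'a = complex] by simp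
qed

lemma positive_exponents_eq_lessThan_kernel_dim:
  fixes T0 UL UR :: "complex mat" and m :: "nat \<Rightarrow> nat"
  assumes T0: "T0 \<in> carrier_mat n n" and UL: "UL \<in> carrier_mat n n" and UR: "UR \<in> carrier_mat n n"
    and dL: "det UL \<noteq> 0" and dR: "det UR \<noteq> 0"
    and smith: "UL * T0 * UR = mat_diag n (\<lambda>i. 0 ^ m i)"
    and antimono: "\<And>i j. i \<le> j \<Longrightarrow> j < n \<Longrightarrow> m j \<le> m i"
  shows "{k. k < n \<and> 0 < m k} = {..<kernel_dim T0}"
proof -
  define q where "q = card {k. k < n \<and> 1 \<le> m k}"
  have S: "{k. k < n \<and> 0 < m k} = {..<q}"
    using antimono_threshold_eq_lessThan[where m = m and n = n and t = 1, OF antimono] by (simp add: q_def Suc_le_eq)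
  have "{..<q} \<subseteq> {..<n}" unfolding S[symmetric] by auto
  then have "q \<le> n" by simp
  have "0 ^ m i = (if i < q then 0 else 1 :: complex)" if "i < n" for i
  proof -
    have "i < q \<longleftrightarrow> 0 < m i" using S that by blast
    then show ?thesis by (cases "m i") simp_all
  qed
  then have diag: "mat_diag n (\<lambda>i. 0 ^ m i) = mat_diag n (\<lambda>i. if i < q then 0 else 1 :: complex)"
    by (intro eq_matI) (simp_all add: mat_diag_def)
  obtain ULi where ULi: "ULi \<in> carrier_mat n n" "ULi * UL = 1\<^sub>m n" using inverse_mat_exists[OF UL dL] by auto
  obtain URi where URi: "URi \<in> carrier_mat n n" "UR * URi = 1\<^sub>m n" using inverse_mat_exists[OF UR dR] by auto
  have "kernel_dim T0 = kernel.dim n T0" using T0 unfolding kernel_dim_def by simp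
  also have "\<dots> = kernel.dim n (UL * T0)" using mat_kernel_mult_eq[OF T0 UL ULi] by simp
  also have "\<dots> = kernel.dim n (UL * T0 * UR)"
    by (rule mat_kernel_dim_mult_eq_right[OF mult_carrier_mat[OF UL T0] UR URi, symmetric])
  also have "\<dots> = q" unfolding smith diag by (rule kernel_dim_diag_zero_one[OF \<open>q \<le> n\<close>])
  finally show ?thesis unfolding S by simp
qed

lemma mult_mat_vec_zero: "A \<in> carrier_mat nr nc \<Longrightarrow> A *\<^sub>v 0\<^sub>v nc = 0\<^sub>v nr"
  by (intro eq_vecI) auto

lemma cols_independent_if_mult_cols_independent:
  fixes U X :: "complex mat"
  assumes U: "U \<in> carrier_mat n n" and X: "X \<in> carrier_mat n r"
    and indep: "\<forall>c\<in>carrier_vec r. U * X *\<^sub>v c = 0\<^sub>v n \<longrightarrow> c = 0\<^sub>v r"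
  shows "\<forall>c\<in>carrier_vec r. X *\<^sub>v c = 0\<^sub>v n \<longrightarrow> c = 0\<^sub>v r"
proof (intro ballI impI)
  fix c :: "complex vec" assume c: "c \<in> carrier_vec r" and Xc: "X *\<^sub>v c = 0\<^sub>v n"
  have "U * X *\<^sub>v c = U *\<^sub>v (X *\<^sub>v c)" by (rule assoc_mult_mat_vec[OF U X c])
  also have "\<dots> = 0\<^sub>v n" unfolding Xc by (rule mult_mat_vec_zero[OF U])
  finally show "c = 0\<^sub>v r" using indep c by auto
qed

lemma det_leading_block_nonzero:
  fixes X0 :: "complex mat"
  assumes X0: "X0 \<in> carrier_mat n r" and pr: "p \<le> r"
    and indep: "\<forall>c\<in>carrier_vec r. X0 *\<^sub>v c = 0\<^sub>v n \<longrightarrow> c = 0\<^sub>v r"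
    and Z: "\<And>k b. k < n \<Longrightarrow> b < p \<Longrightarrow> p \<le> k \<Longrightarrow> X0 $$ (k,b) = 0"
  shows "det (mat p p (\<lambda>(a,b). X0 $$ (a,b))) \<noteq> 0"
proof
  define M where "M = mat p p (\<lambda>(a,b). X0 $$ (a,b))"
  have Mc: "M \<in> carrier_mat p p" by (simp add: M_def)
  assume "det (mat p p (\<lambda>(a,b). X0 $$ (a,b))) = 0"
  then obtain c where c: "c \<in> carrier_vec p" "c \<noteq> 0\<^sub>v p" "M *\<^sub>v c = 0\<^sub>v p"
    using det_0_iff_vec_prod_zero[OF Mc] by (auto simp: M_def)
  define c' where "c' = vec r (\<lambda>b. if b < p then c $ b else 0)"
  have "X0 *\<^sub>v c' = 0\<^sub>v n"
  proof (rule eq_vecI)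
    fix k assume "k < dim_vec (0\<^sub>v n)"
    then have k: "k < n" by simp
    have "(X0 *\<^sub>v c') $ k = (\<Sum>b = 0..<r. X0 $$ (k,b) * (if b < p then c $ b else 0))"
      using X0 k by (auto simp: c'_def scalar_prod_def intro!: sum.cong)
    also have "\<dots> = (\<Sum>b = 0..<p. X0 $$ (k,b) * c $ b)"
      using pr by (subst sum.mono_neutral_right[of "{0..<r}" "{0..<p}"]) auto
    also have "\<dots> = 0"
    proof (cases "k < p")
      case True
      have "(M *\<^sub>v c) $ k = (\<Sum>b = 0..<p. X0 $$ (k,b) * c $ b)"
        using True c(1) by (auto simp: M_def scalar_prod_def intro!: sum.cong)
      then show ?thesis using c(3) True by simp
    next
      case False
      then show ?thesis using Z[OF k] by (intro sum.neutral) auto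
    qed
    finally show "(X0 *\<^sub>v c') $ k = 0\<^sub>v n $ k" using k by simp
  qed (use X0 in auto)
  then have c'0: "c' = 0\<^sub>v r" using indep by (auto simp: c'_def)
  obtain b where b: "b < p" "c $ b \<noteq> 0" using vec_nonzero_component[OF c(1,2)] .
  have "c' $ b = c $ b" using b pr by (simp add: c'_def)
  with c'0 b pr show False by simp
qed

lemma exponent_le_of_zero_pattern:
  fixes X0 :: "complex mat" and nu m :: "nat \<Rightarrow> nat"
  assumes X0: "X0 \<in> carrier_mat n r" and rn: "r \<le> n"
    and indep: "\<forall>c\<in>carrier_vec r. X0 *\<^sub>v c = 0\<^sub>v n \<longrightarrow> c = 0\<^sub>v r"
    and Z: "\<And>k i. k < n \<Longrightarrow> i < r \<Longrightarrow> m k < nu i \<Longrightarrow> X0 $$ (k,i) = 0"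
    and m_antimono: "\<And>i j. i \<le> j \<Longrightarrow> j < n \<Longrightarrow> m j \<le> m i"
    and nu_antimono: "\<And>i j. i \<le> j \<Longrightarrow> j < r \<Longrightarrow> nu j \<le> nu i"
    and i: "i < r"
  shows "nu i \<le> m i"
proof (rule ccontr)
  assume "\<not> nu i \<le> m i"
  define M where "M = mat (Suc i) (Suc i) (\<lambda>(a,b). X0 $$ (a,b))"
  have zero: "X0 $$ (k,b) = 0" if "k < n" "b \<le> i" "i \<le> k" for k b
  proof (rule Z)
    show "m k < nu b"
      using m_antimono[of i k] nu_antimono[of b i] that i \<open>\<not> nu i \<le> m i\<close> by linarith
  qed (use that i in auto)
  have "det M \<noteq> 0"
    unfolding M_def using i by (intro det_leading_block_nonzero[OF X0 _ indep] zero) auto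
  moreover have "det M = (\<Sum>b<Suc i. M $$ (i,b) * cofactor M i b)"
    by (rule laplace_expansion_row) (auto simp: M_def)
  moreover have "M $$ (i,b) = 0" if "b < Suc i" for b
    using that i rn zero[of i b] by (simp add: M_def)
  ultimately show False by simp
qed

lemma solve_leading_block:
  fixes X0 A :: "complex mat"
  assumes X0: "X0 \<in> carrier_mat n r" and qr: "q \<le> r"
    and indep: "\<forall>c\<in>carrier_vec r. X0 *\<^sub>v c = 0\<^sub>v n \<longrightarrow> c = 0\<^sub>v r"
    and Z: "\<And>k b. k < n \<Longrightarrow> b < q \<Longrightarrow> q \<le> k \<Longrightarrow> X0 $$ (k,b) = 0"
    and A: "A \<in> carrier_mat n n'"
    and ZA: "\<And>k l. k < n \<Longrightarrow> q \<le> k \<Longrightarrow> l < n' \<Longrightarrow> A $$ (k,l) = 0"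
  obtains C where "C \<in> carrier_mat r n'" "X0 * C = A"
    "\<And>i l. q \<le> i \<Longrightarrow> i < r \<Longrightarrow> l < n' \<Longrightarrow> C $$ (i,l) = 0"
proof -
  define M where "M = mat q q (\<lambda>(a,b). X0 $$ (a,b))"
  have Mc: "M \<in> carrier_mat q q" by (simp add: M_def)
  have "det M \<noteq> 0" unfolding M_def by (rule det_leading_block_nonzero[OF X0 qr indep Z])
  then obtain Mi where Mi: "Mi \<in> carrier_mat q q" "M * Mi = 1\<^sub>m q" using inverse_mat_exists[OF Mc] by auto
  define At where "At = mat q n' (\<lambda>(a,l). A $$ (a,l))"
  have Atc: "At \<in> carrier_mat q n'" by (simp add: At_def)
  define B where "B = Mi * At"
  have Bc: "B \<in> carrier_mat q n'" using Mi(1) Atc by (simp add: B_def)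
  have MB: "M * B = At" unfolding B_def
    using assoc_mult_mat[OF Mc Mi(1) Atc, symmetric] Mi(2) Atc by simp
  define C where "C = mat r n' (\<lambda>(i,l). if i < q then B $$ (i,l) else 0)"
  show ?thesis
  proof (rule that)
    show "C \<in> carrier_mat r n'" by (simp add: C_def)
    show "X0 * C = A"
    proof (rule eq_matI)
      fix k l assume "k < dim_row A" "l < dim_col A"
      then have k: "k < n" and l: "l < n'" using A by auto
      have "(X0 * C) $$ (k,l) = (\<Sum>b = 0..<r. X0 $$ (k,b) * (if b < q then B $$ (b,l) else 0))"
        using X0 k l by (auto simp: C_def scalar_prod_def intro!: sum.cong)
      also have "\<dots> = (\<Sum>b = 0..<q. X0 $$ (k,b) * B $$ (b,l))"
        using qr by (subst sum.mono_neutral_right[of "{0..<r}" "{0..<q}"]) auto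
      also have "\<dots> = A $$ (k,l)"
      proof (cases "k < q")
        case True
        have "(M * B) $$ (k,l) = (\<Sum>b = 0..<q. X0 $$ (k,b) * B $$ (b,l))"
          using True l Bc by (auto simp: M_def scalar_prod_def intro!: sum.cong)
        then show ?thesis using MB True l by (simp add: At_def)
      next
        case False
        then show ?thesis using Z[OF k] ZA[OF k _ l] by (auto intro!: sum.neutral)
      qed
      finally show "(X0 * C) $$ (k,l) = A $$ (k,l)" .
    qed (use X0 A in \<open>auto simp: C_def\<close>)
  qed (simp add: C_def)
qed

lemma sum_eq_imp_eq_if_le:
  fixes f g :: "nat \<Rightarrow> nat"
  assumes "\<And>i. i < r \<Longrightarrow> f i \<le> g i" "(\<Sum>i<r. f i) = (\<Sum>i<r. g i)" "i < r"
  shows "f i = g i"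
proof (rule ccontr)
  assume "f i \<noteq> g i"
  with assms(1)[of i] assms(3) have "f i < g i" by simp
  with assms(1,3) have "(\<Sum>i<r. f i) < (\<Sum>i<r. g i)"
    by (intro sum_strict_mono_ex1) auto
  with assms(2) show False by simp
qed

lemma pole_order_le_subtract_principal_part:
  fixes F G K :: "complex \<Rightarrow> complex mat"
  assumes e: "0 < e" and j: "1 \<le> j"
    and G: "hol_mat (ball z0 e) n n G" and K: "hol_mat (ball z0 e) n n K" and KG: "K z0 = G z0"
    and FG: "\<And>z. z \<in> ball z0 e - {z0} \<Longrightarrow> (z - z0) ^ j \<cdot>\<^sub>m F z = G z"
  shows "pole_order_le n z0 (\<lambda>z. F z - (1 / (z - z0) ^ j) \<cdot>\<^sub>m K z) (j - 1)"
proof -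
  define f where "f a b = (\<lambda>z. (G z - K z) $$ (a,b))" for a b
  have f0: "f a b z0 = 0" if "a < n" "b < n" for a b
    using that hol_matD(1)[OF G, of z0] by (simp add: f_def KG)
  (* (z - z0)^(j-1) (F - K / (z - z0)^j) is the difference quotient of G - K, which vanishes at z0. *)
  define Q where "Q z = mat n n (\<lambda>(a,b). if z = z0 then deriv (f a b) z0 else (f a b z - f a b z0) / (z - z0))"
    for z
  have "hol_mat (ball z0 e) n n Q"
    unfolding Q_def
    by (intro hol_mat_mat pole_lemma_open open_ball) (unfold f_def, rule hol_matD(2)[OF hol_mat_diff[OF G K]])
  moreover have "(z - z0) ^ (j - 1) \<cdot>\<^sub>m (F z - (1 / (z - z0) ^ j) \<cdot>\<^sub>m K z) = Q z"
    if z: "z \<in> ball z0 e - {z0}" for z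
  proof (rule eq_matI)
    have Fz: "F z \<in> carrier_mat n n"
      using FG[OF z] hol_matD(1)[OF G, of z] by (metis carrier_matD carrier_matI index_smult_mat(2,3))
    fix a b assume "a < dim_row (Q z)" "b < dim_col (Q z)"
    then have ab: "a < n" "b < n" by (auto simp: Q_def)
    have zj: "(z - z0) ^ j = (z - z0) * (z - z0) ^ (j - 1)" "(z - z0) ^ (j - 1) \<noteq> 0" "z - z0 \<noteq> 0"
      using j z by (cases j; simp)+
    have "(z - z0) ^ j * F z $$ (a,b) = G z $$ (a,b)"
      using arg_cong[OF FG[OF z], of "\<lambda>M. M $$ (a,b)"] Fz ab by simp
    then have Fab: "F z $$ (a,b) = G z $$ (a,b) / (z - z0) ^ j"
      using zj by (simp add: eq_divide_eq mult.commute)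
    have "((z - z0) ^ (j - 1) \<cdot>\<^sub>m (F z - (1 / (z - z0) ^ j) \<cdot>\<^sub>m K z)) $$ (a,b)
        = (z - z0) ^ (j - 1) * ((G z $$ (a,b) - K z $$ (a,b)) / (z - z0) ^ j)"
      using ab Fz hol_matD(1)[OF K, of z] by (simp add: Fab diff_divide_distrib)
    also have "\<dots> = (G z $$ (a,b) - K z $$ (a,b)) / (z - z0)"
      unfolding zj(1) using zj(2,3) by (simp add: field_simps)
    also have "\<dots> = Q z $$ (a,b)"
      using ab z hol_matD(1)[OF K, of z] hol_matD(1)[OF G, of z] f0[OF ab] by (simp add: Q_def f_def)
    finally show "((z - z0) ^ (j - 1) \<cdot>\<^sub>m (F z - (1 / (z - z0) ^ j) \<cdot>\<^sub>m K z)) $$ (a,b) = Q z $$ (a,b)" .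
  qed (use hol_matD(1)[OF K] in \<open>auto simp: Q_def\<close>)
  ultimately show ?thesis unfolding pole_order_le_def using e by blast
qed

lemma Delta_inv_mult_shift:
  fixes C :: "complex mat"
  assumes C: "C \<in> carrier_mat r n" and z: "z \<noteq> z0"
    and C_rows: "\<And>i l. i < r \<Longrightarrow> m i < j \<Longrightarrow> l < n \<Longrightarrow> C $$ (i,l) = 0"
  shows "Delta_inv z0 r m z * mat r n (\<lambda>(i,l). (z - z0) ^ (m i - j) * C $$ (i,l))
    = (1 / (z - z0) ^ j) \<cdot>\<^sub>m C"
proof (rule eq_matI)
  fix i l assume "i < dim_row ((1 / (z - z0) ^ j) \<cdot>\<^sub>m C)" "l < dim_col ((1 / (z - z0) ^ j) \<cdot>\<^sub>m C)"
  then have il: "i < r" "l < n" using C by auto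
  have "(Delta_inv z0 r m z * mat r n (\<lambda>(i,l). (z - z0) ^ (m i - j) * C $$ (i,l))) $$ (i,l)
      = 1 / (z - z0) ^ m i * ((z - z0) ^ (m i - j) * C $$ (i,l))"
    unfolding Delta_inv_def by (subst mat_diag_mult_left) (use il in auto)
  also have "\<dots> = 1 / (z - z0) ^ j * C $$ (i,l)"
  proof (cases "m i < j")
    case False
    then have "(z - z0) ^ m i = (z - z0) ^ j * (z - z0) ^ (m i - j)" by (simp add: power_add[symmetric])
    then show ?thesis using z by (simp add: field_simps)
  qed (simp add: C_rows il)
  finally show "(Delta_inv z0 r m z * mat r n (\<lambda>(i,l). (z - z0) ^ (m i - j) * C $$ (i,l))) $$ (i,l)
      = ((1 / (z - z0) ^ j) \<cdot>\<^sub>m C) $$ (i,l)" using il C by simp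
qed (use C in \<open>auto simp: Delta_inv_def mat_diag_def\<close>)

lemma resid_fun_shift:
  fixes C :: "complex mat"
  assumes C: "C \<in> carrier_mat r n" and z: "z \<noteq> z0"
    and C_rows: "\<And>i l. i < r \<Longrightarrow> m i < j \<Longrightarrow> l < n \<Longrightarrow> C $$ (i,l) = 0"
    and Y: "Y z \<in> carrier_mat n' r" and V: "V z \<in> carrier_mat r n"
  shows "resid_fun T z0 r m Y (\<lambda>z. V z + mat r n (\<lambda>(i,l). (z - z0) ^ (m i - j) * C $$ (i,l))) z
    = resid_fun T z0 r m Y V z - (1 / (z - z0) ^ j) \<cdot>\<^sub>m (Y z * C)"
proof -
  define S where "S = mat r n (\<lambda>(i,l). (z - z0) ^ (m i - j) * C $$ (i,l))"
  have Di: "Delta_inv z0 r m z \<in> carrier_mat r r" by (simp add: Delta_inv_def)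
  have YD: "Y z * Delta_inv z0 r m z \<in> carrier_mat n' r" using Y Di by simp
  have S: "S \<in> carrier_mat r n" by (simp add: S_def)
  have "Y z * Delta_inv z0 r m z * (V z + S)
      = Y z * Delta_inv z0 r m z * V z + Y z * (Delta_inv z0 r m z * S)"
    by (simp add: mult_add_distrib_mat[OF YD V S] assoc_mult_mat[OF Y Di S])
  also have "Y z * (Delta_inv z0 r m z * S) = (1 / (z - z0) ^ j) \<cdot>\<^sub>m (Y z * C)"
    using Delta_inv_mult_shift[OF C z C_rows] mult_smult_distrib[OF Y C] by (simp add: S_def)
  finally have "Y z * Delta_inv z0 r m z * (V z + S)
      = Y z * Delta_inv z0 r m z * V z + (1 / (z - z0) ^ j) \<cdot>\<^sub>m (Y z * C)" .
  then show ?thesis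
    unfolding resid_fun_def S_def[symmetric] using YD V C Y
    by (intro eq_matI) (auto simp: diff_diff_eq)
qed

lemma pole_order_le_cong:
  assumes "pole_order_le n z0 F k" "0 < e" "\<And>z. z \<in> ball z0 e - {z0} \<Longrightarrow> F' z = F z"
  shows "pole_order_le n z0 F' k"
proof -
  obtain e' G where "0 < e'" "hol_mat (ball z0 e') n n G"
    "\<And>z. z \<in> ball z0 e' - {z0} \<Longrightarrow> (z - z0) ^ k \<cdot>\<^sub>m F z = G z"
    using assms(1) unfolding pole_order_le_def by blast
  with assms(2,3) show ?thesis
    unfolding pole_order_le_def
    by (intro exI[of _ "min e e'"] conjI exI[of _ G]) (auto intro: hol_mat_subset)
qed

lemma right_canonicalD:
  assumes "right_canonical \<Omega> T z0 n m Y"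
  defines "r \<equiv> kernel_dim (T z0)" and "nu \<equiv> \<lambda>i. root_mult T z0 n (\<lambda>z. col (Y z) i)"
  shows "hol_mat \<Omega> n r Y" "\<And>i. i < r \<Longrightarrow> root_function \<Omega> T z0 n (\<lambda>z. col (Y z) i)"
    "\<forall>c\<in>carrier_vec r. Y z0 *\<^sub>v c = 0\<^sub>v n \<longrightarrow> c = 0\<^sub>v r" "(\<Sum>i<r. nu i) = (\<Sum>i<r. m i)"
    "\<And>i j. i \<le> j \<Longrightarrow> j < r \<Longrightarrow> nu j \<le> nu i"
  using assms(1) unfolding right_canonical_def Let_def r_def nu_def by auto

locale local_smith_form =
  fixes z0 :: complex and e :: real and n :: nat and m :: "nat \<Rightarrow> nat"
    and T UL UR :: "complex \<Rightarrow> complex mat"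
  assumes e_pos: "0 < e"
    and hol_T: "hol_mat (ball z0 e) n n T"
    and hol_UL: "hol_mat (ball z0 e) n n UL"
    and hol_UR: "hol_mat (ball z0 e) n n UR"
    and det_UL: "\<And>z. z \<in> ball z0 e \<Longrightarrow> det (UL z) \<noteq> 0"
    and det_UR: "\<And>z. z \<in> ball z0 e \<Longrightarrow> det (UR z) \<noteq> 0"
    and smith: "\<And>z. z \<in> ball z0 e \<Longrightarrow> UL z * T z * UR z = mat_diag n (\<lambda>i. (z - z0) ^ m i)"
    and m_antimono: "\<And>i j. i \<le> j \<Longrightarrow> j < n \<Longrightarrow> m j \<le> m i"

lemma local_smith_form_shrink:
  assumes "local_smith_form z0 e n m T UL UR" "0 < d" "d \<le> e"
  shows "local_smith_form z0 d n m T UL UR"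
proof -
  interpret local_smith_form z0 e n m T UL UR by fact
  have sub: "ball z0 d \<subseteq> ball z0 e" using assms(3) by (rule subset_ball)
  show ?thesis
    by unfold_locales
      (use assms(2) sub det_UL det_UR smith m_antimono in
        \<open>auto intro: hol_mat_subset[OF hol_T] hol_mat_subset[OF hol_UL] hol_mat_subset[OF hol_UR]\<close>)
qed

lemma partial_multiplicities_local_smith_form:
  assumes "open \<Omega>" "z0 \<in> \<Omega>" "hol_mat \<Omega> n n T" "partial_multiplicities T z0 n m"
  obtains e UL UR where "local_smith_form z0 e n m T UL UR" "ball z0 e \<subseteq> \<Omega>"
proof -
  obtain e1 UL UR where e1: "0 < e1" and UL: "hol_mat (ball z0 e1) n n UL"
    and UR: "hol_mat (ball z0 e1) n n UR" and dL: "det (UL z0) \<noteq> 0" and dR: "det (UR z0) \<noteq> 0"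
    and smith: "\<And>z. z \<in> ball z0 e1 \<Longrightarrow> UL z * T z * UR z = mat_diag n (\<lambda>i. (z - z0) ^ m i)"
    and antimono: "\<And>i j. i \<le> j \<Longrightarrow> j < n \<Longrightarrow> m j \<le> m i"
    using assms(4) unfolding partial_multiplicities_def by metis
  obtain eO where eO: "0 < eO" "ball z0 eO \<subseteq> \<Omega>" using assms(1,2) open_contains_ball by blast
  obtain dl where dl: "0 < dl" "\<And>z. z \<in> ball z0 dl \<Longrightarrow> det (UL z) \<noteq> 0"
    using holomorphic_nonzero_near[OF holomorphic_on_det[OF UL] open_ball _ dL] e1 by auto
  obtain dr where dr: "0 < dr" "\<And>z. z \<in> ball z0 dr \<Longrightarrow> det (UR z) \<noteq> 0"
    using holomorphic_nonzero_near[OF holomorphic_on_det[OF UR] open_ball _ dR] e1 by auto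
  define e where "e = min (min e1 eO) (min dl dr)"
  have sub: "ball z0 e \<subseteq> ball z0 e1" "ball z0 e \<subseteq> \<Omega>" "ball z0 e \<subseteq> ball z0 dl" "ball z0 e \<subseteq> ball z0 dr"
    using eO(2) by (auto simp: e_def)
  show ?thesis
  proof (rule that)
    show "local_smith_form z0 e n m T UL UR"
      by unfold_locales
        (use e1 eO dl dr sub smith antimono in
          \<open>auto simp: e_def intro: hol_mat_subset[OF assms(3)] hol_mat_subset[OF UL] hol_mat_subset[OF UR]\<close>)
  qed (rule sub(2))
qed

context local_smith_form
begin

lemma T_carrier: "T z \<in> carrier_mat n n"
  and UL_carrier: "UL z \<in> carrier_mat n n"
  and UR_carrier: "UR z \<in> carrier_mat n n"
  using hol_matD(1)[OF hol_T] hol_matD(1)[OF hol_UL] hol_matD(1)[OF hol_UR] by auto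

definition UR_inv :: "complex \<Rightarrow> complex mat" where
  "UR_inv z = (1 / det (UR z)) \<cdot>\<^sub>m adj_mat (UR z)"

lemma hol_UR_inv: "hol_mat (ball z0 e) n n UR_inv"
  and UR_UR_inv: "z \<in> ball z0 e \<Longrightarrow> UR z * UR_inv z = 1\<^sub>m n"
  using hol_mat_inverse[OF hol_UR det_UR] unfolding UR_inv_def by auto

lemma UR_inv_carrier: "UR_inv z \<in> carrier_mat n n"
  using hol_matD(1)[OF hol_UR_inv] .

lemma UR_UR_inv_mult:
  assumes "M \<in> carrier_mat n c"
  shows "UR z0 * (UR_inv z0 * M) = M"
proof -
  have "UR z0 * (UR_inv z0 * M) = UR z0 * UR_inv z0 * M"
    by (rule assoc_mult_mat[OF UR_carrier UR_inv_carrier assms, symmetric])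
  also have "\<dots> = M" using UR_UR_inv[of z0] e_pos assms by simp
  finally show ?thesis .
qed

lemma UL_T_eq:
  assumes "z \<in> ball z0 e"
  shows "UL z * T z = mat_diag n (\<lambda>i. (z - z0) ^ m i) * UR_inv z"
proof -
  have ULT: "UL z * T z \<in> carrier_mat n n" by (rule mult_carrier_mat[OF UL_carrier T_carrier])
  have "UL z * T z = UL z * T z * (UR z * UR_inv z)"
    by (simp add: UR_UR_inv[OF assms] right_mult_one_mat[OF ULT])
  also have "\<dots> = UL z * T z * UR z * UR_inv z"
    by (rule assoc_mult_mat[OF ULT UR_carrier UR_inv_carrier, symmetric])
  finally show ?thesis by (simp add: smith[OF assms])
qed

lemma det_T_nonzero:
  assumes "z \<in> ball z0 e" "z \<noteq> z0"
  shows "det (T z) \<noteq> 0"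
proof
  assume "det (T z) = 0"
  then have "det (UL z * T z * UR z) = 0"
    by (simp add: det_mult[OF mult_carrier_mat[OF UL_carrier T_carrier] UR_carrier]
        det_mult[OF UL_carrier T_carrier])
  then have "det (mat_diag n (\<lambda>i. (z - z0) ^ m i)) = 0" by (simp only: smith[OF assms(1)])
  moreover have "det (mat_diag n (\<lambda>i. (z - z0) ^ m i) * Delta_inv z0 n m z)
      = det (mat_diag n (\<lambda>i. (z - z0) ^ m i)) * det (Delta_inv z0 n m z)"
    by (rule det_mult[of _ n]) (auto simp: Delta_inv_def)
  ultimately show False using Delta_inv_mult_diag(2)[OF assms(2), of n m] by simp
qed

lemma T_inverse:
  assumes "z \<in> ball z0 e" "z \<noteq> z0"
  shows "the (mat_inverse (T z)) \<in> carrier_mat n n" "T z * the (mat_inverse (T z)) = 1\<^sub>m n"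
    "the (mat_inverse (T z)) * T z = 1\<^sub>m n"
  using mat_inverse_the[OF T_carrier det_T_nonzero[OF assms]] by auto

lemma positive_exponents_kernel_dim:
  shows "kernel_dim (T z0) \<le> n" and "\<And>k. k < n \<Longrightarrow> 0 < m k \<longleftrightarrow> k < kernel_dim (T z0)"
proof -
  have "UL z0 * T z0 * UR z0 = mat_diag n (\<lambda>i. 0 ^ m i)" using smith[of z0] e_pos by simp
  from positive_exponents_eq_lessThan_kernel_dim[OF T_carrier UL_carrier UR_carrier
      det_UL det_UR this m_antimono] e_pos
  have S: "{k. k < n \<and> 0 < m k} = {..<kernel_dim (T z0)}" by simp
  have "{..<kernel_dim (T z0)} \<subseteq> {..<n}" unfolding S[symmetric] by auto
  then show "kernel_dim (T z0) \<le> n" by simp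
  show "0 < m k \<longleftrightarrow> k < kernel_dim (T z0)" if "k < n" for k
    using that S by blast
qed

lemma vec_zero_order_T_mult:
  assumes y: "hol_vec (ball z0 e) n y" and y0: "y z0 \<noteq> 0\<^sub>v n"
  shows "vec_zero_order n z0 (\<lambda>z. T z *\<^sub>v y z) (root_mult T z0 n y)"
proof -
  obtain l where l: "l < n" "y z0 $ l \<noteq> 0" using vec_nonzero_component[OF hol_vecD(1)[OF y] y0] .
  obtain d where d: "0 < d" "\<And>z. z \<in> ball z0 d \<Longrightarrow> y z $ l \<noteq> 0"
    using holomorphic_nonzero_near[OF hol_vecD(2)[OF y l(1)] open_ball _ l(2)] e_pos by auto
  define z1 where "z1 = z0 + of_real (min e d / 2)"
  have z1: "z1 \<in> ball z0 e" "z1 \<noteq> z0" "z1 \<in> ball z0 d"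
    using e_pos d(1) by (auto simp: z1_def dist_norm)
  have "y z1 \<noteq> 0\<^sub>v n" using d(2)[OF z1(3)] l(1) by auto
  moreover have "the (mat_inverse (T z1)) *\<^sub>v (T z1 *\<^sub>v y z1) = (the (mat_inverse (T z1)) * T z1) *\<^sub>v y z1"
    by (rule assoc_mult_mat_vec[OF T_inverse(1)[OF z1(1,2)] T_carrier hol_vecD(1)[OF y], symmetric])
  then have "y z1 = the (mat_inverse (T z1)) *\<^sub>v (T z1 *\<^sub>v y z1)"
    using T_inverse(3)[OF z1(1,2)] hol_vecD(1)[OF y, of z1] by simp
  ultimately have "T z1 *\<^sub>v y z1 \<noteq> 0\<^sub>v n"
    using mult_mat_vec_zero[OF T_inverse(1)[OF z1(1,2)]] by auto
  then show ?thesis by (rule root_mult_vec_zero_order[OF hol_vec_mult_mat_vec[OF hol_T y] z1(1)])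
qed

lemma UR_inv_mult_zero_entry:
  assumes d: "0 < d" "d \<le> e" and Y: "hol_mat (ball z0 d) n r Y" and H: "hol_mat (ball z0 d) n r H"
    and TY: "\<And>z. z \<in> ball z0 d \<Longrightarrow> T z * Y z = H z * mat_diag r (\<lambda>i. (z - z0) ^ p i)"
    and ki: "k < n" "i < r" "m k < p i"
  shows "(UR_inv z0 * Y z0) $$ (k,i) = 0"
proof -
  have sub: "ball z0 d \<subseteq> ball z0 e" using d(2) by (rule subset_ball)
  have X: "hol_mat (ball z0 d) n r (\<lambda>z. UR_inv z * Y z)"
    by (rule hol_mat_mult[OF hol_mat_subset[OF hol_UR_inv sub] Y])
  have P: "hol_mat (ball z0 d) n r (\<lambda>z. UL z * H z)"
    by (rule hol_mat_mult[OF hol_mat_subset[OF hol_UL sub] H])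
  show ?thesis
  proof (rule vanishes_at_center_if_power_factor[of "ball z0 d" z0 _ "\<lambda>z. (UL z * H z) $$ (k,i)" "p i - m k"])
    show "continuous_on (ball z0 d) (\<lambda>z. (UR_inv z * Y z) $$ (k,i))"
      "continuous_on (ball z0 d) (\<lambda>z. (UL z * H z) $$ (k,i))"
      using hol_matD(2)[OF X ki(1,2)] hol_matD(2)[OF P ki(1,2)] by (auto intro: holomorphic_on_imp_continuous_on)
    fix z assume z: "z \<in> ball z0 d" "z \<noteq> z0"
    note Yc = hol_matD(1)[OF Y, of z] and Hc = hol_matD(1)[OF H, of z]
    have Xc: "UR_inv z * Y z \<in> carrier_mat n r" and Pc: "UL z * H z \<in> carrier_mat n r"
      using UR_inv_carrier[of z] UL_carrier[of z] Yc Hc by auto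
    have Dc: "mat_diag n (\<lambda>i. (z - z0) ^ m i) \<in> carrier_mat n n" by (simp add: mat_diag_def)
    have "mat_diag n (\<lambda>i. (z - z0) ^ m i) * (UR_inv z * Y z)
        = mat_diag n (\<lambda>i. (z - z0) ^ m i) * UR_inv z * Y z"
      by (rule assoc_mult_mat[OF Dc UR_inv_carrier Yc, symmetric])
    also have "\<dots> = UL z * T z * Y z" using UL_T_eq[of z] z sub by auto
    also have "\<dots> = UL z * (H z * mat_diag r (\<lambda>i. (z - z0) ^ p i))"
      using assoc_mult_mat[OF UL_carrier T_carrier Yc] TY[OF z(1)] by simp
    also have "\<dots> = UL z * H z * mat_diag r (\<lambda>i. (z - z0) ^ p i)"
      by (rule assoc_mult_mat[OF UL_carrier Hc, of _ r, symmetric]) (simp add: mat_diag_def)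
    finally have eq: "mat_diag n (\<lambda>i. (z - z0) ^ m i) * (UR_inv z * Y z)
        = UL z * H z * mat_diag r (\<lambda>i. (z - z0) ^ p i)" .
    have "(z - z0) ^ m k * (UR_inv z * Y z) $$ (k,i) = (UL z * H z) $$ (k,i) * (z - z0) ^ p i"
      using arg_cong[OF eq, of "\<lambda>M. M $$ (k,i)"] ki
      unfolding mat_diag_mult_left[OF Xc] mat_diag_mult_right[OF Pc] by simp
    moreover have "(z - z0) ^ p i = (z - z0) ^ m k * (z - z0) ^ (p i - m k)"
      using ki(3) by (simp add: power_add[symmetric])
    ultimately show "(UR_inv z * Y z) $$ (k,i) = (z - z0) ^ (p i - m k) * (UL z * H z) $$ (k,i)"
      using z(2) by simp
  qed (use d ki in auto)
qed

lemma right_canonical_root_mult_factorization: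
  assumes RC: "right_canonical \<Omega> T z0 n m Y" and sub: "ball z0 e \<subseteq> \<Omega>"
  obtains d H where "0 < d" "d \<le> e" "hol_mat (ball z0 d) n (kernel_dim (T z0)) H"
    "\<And>z. z \<in> ball z0 d \<Longrightarrow> T z * Y z
      = H z * mat_diag (kernel_dim (T z0)) (\<lambda>i. (z - z0) ^ root_mult T z0 n (\<lambda>z. col (Y z) i))"
proof -
  define r where "r = kernel_dim (T z0)"
  note RC' = right_canonicalD[OF RC, folded r_def]
  have Y: "hol_mat (ball z0 e) n r Y" using hol_mat_subset[OF RC'(1) sub] .
  have "vec_zero_order n z0 (\<lambda>z. col (T z * Y z) i) (root_mult T z0 n (\<lambda>z. col (Y z) i))"
    if i: "i < r" for i
  proof -
    have "col (T z * Y z) i = T z *\<^sub>v col (Y z) i" for z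
      by (rule col_mult2[OF T_carrier hol_matD(1)[OF Y] i])
    moreover have "col (Y z0) i \<noteq> 0\<^sub>v n" using RC'(2)[OF i] unfolding root_function_def by simp
    ultimately show ?thesis using vec_zero_order_T_mult[OF hol_vec_col[OF Y i]] by simp
  qed
  note orders = this
  show ?thesis
  proof (rule hol_mat_factor_columns[OF mult_carrier_mat[OF T_carrier hol_matD(1)[OF Y]] orders])
    fix d H assume d: "0 < d" and H: "hol_mat (ball z0 d) n r H"
      and TY: "\<And>z. z \<in> ball z0 d \<Longrightarrow> T z * Y z
        = H z * mat_diag r (\<lambda>i. (z - z0) ^ root_mult T z0 n (\<lambda>z. col (Y z) i))"
    have "ball z0 (min d e) \<subseteq> ball z0 d" by (simp add: subset_ball)
    with d e_pos H TY show ?thesis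
      by (intro that[of "min d e" H]) (auto simp: r_def intro: hol_mat_subset)
  qed
qed

lemma right_canonical_root_mult_eq:
  assumes RC: "right_canonical \<Omega> T z0 n m Y" and sub: "ball z0 e \<subseteq> \<Omega>" and i: "i < kernel_dim (T z0)"
  shows "root_mult T z0 n (\<lambda>z. col (Y z) i) = m i"
proof -
  define r where "r = kernel_dim (T z0)"
  define nu where "nu i = root_mult T z0 n (\<lambda>z. col (Y z) i)" for i
  note RC' = right_canonicalD[OF RC, folded r_def nu_def]
  obtain d H where d: "0 < d" "d \<le> e" and H: "hol_mat (ball z0 d) n r H"
    and TY: "\<And>z. z \<in> ball z0 d \<Longrightarrow> T z * Y z = H z * mat_diag r (\<lambda>i. (z - z0) ^ nu i)"
    using right_canonical_root_mult_factorization[OF RC sub] unfolding r_def nu_def by blast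
  have Y: "hol_mat (ball z0 d) n r Y"
    using hol_mat_subset[OF RC'(1)] sub subset_ball[OF d(2)] by blast
  have X0: "UR_inv z0 * Y z0 \<in> carrier_mat n r" by (rule mult_carrier_mat[OF UR_inv_carrier hol_matD(1)[OF Y]])
  have indep: "\<forall>c\<in>carrier_vec r. UR_inv z0 * Y z0 *\<^sub>v c = 0\<^sub>v n \<longrightarrow> c = 0\<^sub>v r"
    using cols_independent_if_mult_cols_independent[OF UR_carrier[of z0] X0] RC'(3)
    unfolding UR_UR_inv_mult[OF hol_matD(1)[OF Y]] by blast
  have "nu k \<le> m k" if "k < r" for k
    using exponent_le_of_zero_pattern[OF X0 positive_exponents_kernel_dim(1)[folded r_def] indep
        UR_inv_mult_zero_entry[OF d Y H TY] m_antimono RC'(5) that] .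
  from sum_eq_imp_eq_if_le[OF this RC'(4)] i show ?thesis by (simp add: r_def nu_def)
qed

lemma right_canonical_factorization:
  assumes RC: "right_canonical \<Omega> T z0 n m Y" and sub: "ball z0 e \<subseteq> \<Omega>"
  obtains d H where "0 < d" "d \<le> e" "hol_mat (ball z0 d) n (kernel_dim (T z0)) H"
    "\<And>z. z \<in> ball z0 d \<Longrightarrow> T z * Y z = H z * mat_diag (kernel_dim (T z0)) (\<lambda>i. (z - z0) ^ m i)"
proof -
  have "mat_diag (kernel_dim (T z0)) (\<lambda>i. (z - z0) ^ root_mult T z0 n (\<lambda>z. col (Y z) i))
      = mat_diag (kernel_dim (T z0)) (\<lambda>i. (z - z0) ^ m i)" for z
    using right_canonical_root_mult_eq[OF RC sub] by (intro eq_matI) (simp_all add: mat_diag_def)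
  with right_canonical_root_mult_factorization[OF RC sub] that show ?thesis by metis
qed

lemma UR_inv_mult_T_inverse:
  assumes z: "z \<in> ball z0 e" "z \<noteq> z0"
  shows "UR_inv z * the (mat_inverse (T z)) = Delta_inv z0 n m z * UL z"
proof -
  define Ti where "Ti = the (mat_inverse (T z))"
  define D where "D = mat_diag n (\<lambda>i. (z - z0) ^ m i)"
  define Di where "Di = Delta_inv z0 n m z"
  note Ti = T_inverse[OF z, folded Ti_def]
  note W = UR_inv_carrier[of z] and UL = UL_carrier[of z] and T = T_carrier[of z]
  have c: "D \<in> carrier_mat n n" "Di \<in> carrier_mat n n"
    by (simp_all add: D_def Di_def Delta_inv_def mat_diag_def)
  have "UR_inv z * Ti = Di * D * UR_inv z * Ti"
    using Delta_inv_mult_diag(1)[OF z(2), of n m] W by (simp add: Di_def D_def)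
  also have "\<dots> = Di * (UL z * T z) * Ti"
    by (simp add: assoc_mult_mat[OF c(2,1) W] UL_T_eq[OF z(1), folded D_def])
  also have "\<dots> = Di * UL z * (T z * Ti)"
    using c(2) UL T Ti(1) by (simp add: assoc_mult_mat[of _ n n _ n _ n])
  finally show ?thesis using Ti(2) c(2) UL by (simp add: Ti_def Di_def)
qed

lemma UR_inv_resid_fun:
  assumes z: "z \<in> ball z0 e" "z \<noteq> z0"
    and Y: "Y z \<in> carrier_mat n r" and H: "H z \<in> carrier_mat n r" and V: "V z \<in> carrier_mat r n"
    and TY: "T z * Y z = H z * mat_diag r (\<lambda>i. (z - z0) ^ m i)"
  shows "UR_inv z * resid_fun T z0 r m Y V z = Delta_inv z0 n m z * (UL z - UL z * H z * V z)"
proof -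
  define Ti where "Ti = the (mat_inverse (T z))"
  define Di where "Di = Delta_inv z0 n m z"
  define Dr where "Dr = mat_diag r (\<lambda>i. (z - z0) ^ m i)"
  define Dri where "Dri = Delta_inv z0 r m z"
  note Ti = T_inverse[OF z, folded Ti_def] and WTi = UR_inv_mult_T_inverse[OF z, folded Ti_def Di_def]
  have c: "Di \<in> carrier_mat n n" "Dr \<in> carrier_mat r r" "Dri \<in> carrier_mat r r"
    by (simp_all add: Di_def Dr_def Dri_def Delta_inv_def mat_diag_def)
  note W = UR_inv_carrier[of z] and UL = UL_carrier[of z] and T = T_carrier[of z]
  have WY: "UR_inv z * Y z = Di * UL z * H z * Dr"
  proof -
    have "UR_inv z * Y z = UR_inv z * (Ti * T z) * Y z" using Ti(3) W by simp
    also have "\<dots> = UR_inv z * Ti * (T z * Y z)"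
      using W Ti(1) T Y by (simp add: assoc_mult_mat[of _ n n _ n _ r])
    finally show ?thesis
      using WTi TY c(1) UL H c(2)
      by (simp add: Dr_def assoc_mult_mat[of _ n n _ n _ r] assoc_mult_mat[of _ n n _ r _ r])
  qed
  have "UR_inv z * (Y z * Dri * V z) = Di * (UL z * H z * V z)"
  proof -
    have "UR_inv z * (Y z * Dri * V z) = UR_inv z * Y z * Dri * V z"
      using W Y c(3) V by (simp add: assoc_mult_mat[of _ n n _ r _ n] assoc_mult_mat[of _ n r _ r _ r])
    also have "\<dots> = Di * UL z * H z * (Dr * Dri) * V z"
      unfolding WY using c UL H by (simp add: assoc_mult_mat[of _ n r _ r _ r])
    also have "\<dots> = Di * UL z * H z * V z"
      using Delta_inv_mult_diag(2)[OF z(2), of r m] c UL H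
      by (simp add: Dr_def Dri_def)
    also have "\<dots> = Di * (UL z * H z * V z)"
      using assoc_mult_mat[OF c(1) UL H] assoc_mult_mat[OF c(1) mult_carrier_mat[OF UL H] V] by simp
    finally show ?thesis .
  qed
  then show ?thesis
    unfolding resid_fun_def Ti_def[symmetric] Dri_def[symmetric] Di_def[symmetric]
    using mult_minus_distrib_mat[OF W Ti(1), of "Y z * Dri * V z"]
      mult_minus_distrib_mat[OF c(1) UL, of "UL z * H z * V z"] c Y V UL H
    by (simp add: WTi)
qed

lemma UR_inv_pole_coefficient_zero_entry:
  assumes Y: "hol_mat (ball z0 e) n r Y" and H: "hol_mat (ball z0 e) n r H"
    and V: "hol_mat (ball z0 e) r n V" and G: "hol_mat (ball z0 e) n n G"
    and TY: "\<And>z. z \<in> ball z0 e \<Longrightarrow> T z * Y z = H z * mat_diag r (\<lambda>i. (z - z0) ^ m i)"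
    and GF: "\<And>z. z \<in> ball z0 e - {z0} \<Longrightarrow> (z - z0) ^ j \<cdot>\<^sub>m resid_fun T z0 r m Y V z = G z"
    and kl: "k < n" "l < n" "m k < j"
  shows "(UR_inv z0 * G z0) $$ (k,l) = 0"
proof -
  define P where "P z = UL z - UL z * H z * V z" for z
  have P: "hol_mat (ball z0 e) n n P"
    unfolding P_def by (intro hol_mat_diff hol_UL hol_mat_mult[OF hol_mat_mult[OF hol_UL H] V])
  have WG: "hol_mat (ball z0 e) n n (\<lambda>z. UR_inv z * G z)" by (rule hol_mat_mult[OF hol_UR_inv G])
  show ?thesis
  proof (rule vanishes_at_center_if_power_factor[of "ball z0 e" z0 _ "\<lambda>z. P z $$ (k,l)" "j - m k"])
    show "continuous_on (ball z0 e) (\<lambda>z. (UR_inv z * G z) $$ (k,l))"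
      "continuous_on (ball z0 e) (\<lambda>z. P z $$ (k,l))"
      using hol_matD(2)[OF WG kl(1,2)] hol_matD(2)[OF P kl(1,2)] by (auto intro: holomorphic_on_imp_continuous_on)
    fix z assume z: "z \<in> ball z0 e" "z \<noteq> z0"
    have R: "resid_fun T z0 r m Y V z \<in> carrier_mat n n"
      unfolding resid_fun_def Delta_inv_def
      by (intro minus_carrier_mat mult_carrier_mat[OF mult_carrier_mat[OF hol_matD(1)[OF Y]] hol_matD(1)[OF V]])
        (simp add: mat_diag_def)
    have "UR_inv z * G z = UR_inv z * ((z - z0) ^ j \<cdot>\<^sub>m resid_fun T z0 r m Y V z)"
      using GF[of z] z by simp
    also have "\<dots> = (z - z0) ^ j \<cdot>\<^sub>m (UR_inv z * resid_fun T z0 r m Y V z)"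
      by (rule mult_smult_distrib[OF UR_inv_carrier R])
    also have "\<dots> = (z - z0) ^ j \<cdot>\<^sub>m (Delta_inv z0 n m z * P z)"
      unfolding P_def
      using UR_inv_resid_fun[where Y = Y and H = H and V = V,
          OF z hol_matD(1)[OF Y, of z] hol_matD(1)[OF H, of z] hol_matD(1)[OF V, of z] TY[OF z(1)]]
      by simp
    finally have "(UR_inv z * G z) $$ (k,l) = (z - z0) ^ j * (1 / (z - z0) ^ m k * P z $$ (k,l))"
      using kl hol_matD(1)[OF P, of z] by (simp add: Delta_inv_def mat_diag_mult_left)
    also have "\<dots> = (z - z0) ^ (j - m k) * P z $$ (k,l)"
    proof -
      have "(z - z0) ^ j = (z - z0) ^ m k * (z - z0) ^ (j - m k)"
        using kl(3) by (simp add: power_add[symmetric])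
      then show ?thesis using z(2) by simp
    qed
    finally show "(UR_inv z * G z) $$ (k,l) = (z - z0) ^ (j - m k) * P z $$ (k,l)" .
  qed (use e_pos kl in auto)
qed

lemma large_exponents_prefix:
  assumes "1 \<le> j"
  obtains q where "q \<le> kernel_dim (T z0)" "\<And>k. k < n \<Longrightarrow> j \<le> m k \<longleftrightarrow> k < q"
proof -
  define q where "q = card {k. k < n \<and> j \<le> m k}"
  have S: "{k. k < n \<and> j \<le> m k} = {..<q}"
    unfolding q_def by (rule antimono_threshold_eq_lessThan[where m = m and n = n, OF m_antimono])
  show ?thesis
  proof (rule that)
    show jq: "j \<le> m k \<longleftrightarrow> k < q" if "k < n" for k using S that by blast
    show "q \<le> kernel_dim (T z0)"
    proof (rule ccontr)
      assume "\<not> q \<le> kernel_dim (T z0)"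
      then have "kernel_dim (T z0) \<in> {..<q}" by simp
      then have "kernel_dim (T z0) < n" "j \<le> m (kernel_dim (T z0))" unfolding S[symmetric] by auto
      with assms positive_exponents_kernel_dim(2) show False by fastforce
    qed
  qed
qed

(* The rows k of the pole coefficient with m k < j vanish, and so do the entries of
  UR_inv z0 * Y z0 with m k < j \<le> m b; the nonsingular leading block then yields C. *)
lemma pole_coefficient_exists:
  assumes Y: "hol_mat (ball z0 e) n (kernel_dim (T z0)) Y" and H: "hol_mat (ball z0 e) n (kernel_dim (T z0)) H"
    and V: "hol_mat (ball z0 e) (kernel_dim (T z0)) n V" and G: "hol_mat (ball z0 e) n n G"
    and indep: "\<forall>c\<in>carrier_vec (kernel_dim (T z0)). Y z0 *\<^sub>v c = 0\<^sub>v n \<longrightarrow> c = 0\<^sub>v (kernel_dim (T z0))"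
    and TY: "\<And>z. z \<in> ball z0 e \<Longrightarrow> T z * Y z = H z * mat_diag (kernel_dim (T z0)) (\<lambda>i. (z - z0) ^ m i)"
    and GF: "\<And>z. z \<in> ball z0 e - {z0} \<Longrightarrow>
      (z - z0) ^ j \<cdot>\<^sub>m resid_fun T z0 (kernel_dim (T z0)) m Y V z = G z"
    and j: "1 \<le> j"
  obtains C where "C \<in> carrier_mat (kernel_dim (T z0)) n" "Y z0 * C = G z0"
    "\<And>i l. i < kernel_dim (T z0) \<Longrightarrow> m i < j \<Longrightarrow> l < n \<Longrightarrow> C $$ (i,l) = 0"
proof -
  define r where "r = kernel_dim (T z0)"
  obtain q where qr: "q \<le> r" and jq: "\<And>k. k < n \<Longrightarrow> j \<le> m k \<longleftrightarrow> k < q"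
    using large_exponents_prefix[OF j] unfolding r_def by blast
  note Y0 = hol_matD(1)[OF Y, of z0, folded r_def] and G0 = hol_matD(1)[OF G, of z0]
  have X0: "UR_inv z0 * Y z0 \<in> carrier_mat n r" by (rule mult_carrier_mat[OF UR_inv_carrier Y0])
  have indepX: "\<forall>c\<in>carrier_vec r. UR_inv z0 * Y z0 *\<^sub>v c = 0\<^sub>v n \<longrightarrow> c = 0\<^sub>v r"
    using cols_independent_if_mult_cols_independent[OF UR_carrier[of z0] X0] indep
    unfolding UR_UR_inv_mult[OF Y0] r_def by blast
  have ZX: "(UR_inv z0 * Y z0) $$ (k,b) = 0" if "k < n" "b < q" "q \<le> k" for k b
    using UR_inv_mult_zero_entry[OF e_pos order_refl Y H TY, of k b] that qr jq[of k] jq[of b]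
    by (simp add: r_def)
  have ZA: "(UR_inv z0 * G z0) $$ (k,l) = 0" if "k < n" "q \<le> k" "l < n" for k l
    using UR_inv_pole_coefficient_zero_entry[OF Y H V G TY GF, of k l] that jq[of k] by simp
  obtain C where C: "C \<in> carrier_mat r n" "UR_inv z0 * Y z0 * C = UR_inv z0 * G z0"
    and C0: "\<And>i l. q \<le> i \<Longrightarrow> i < r \<Longrightarrow> l < n \<Longrightarrow> C $$ (i,l) = 0"
    using solve_leading_block[OF X0 qr indepX ZX mult_carrier_mat[OF UR_inv_carrier G0] ZA] by blast
  show ?thesis
  proof (rule that[folded r_def])
    show "C \<in> carrier_mat r n" by fact
    have "Y z0 * C = UR z0 * (UR_inv z0 * Y z0 * C)"
      using assoc_mult_mat[OF UR_inv_carrier Y0 C(1)] UR_UR_inv_mult[OF mult_carrier_mat[OF Y0 C(1)]] by simp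
    then show "Y z0 * C = G z0" unfolding C(2) UR_UR_inv_mult[OF G0] .
    fix i l assume "i < r" "m i < j" "l < n"
    then show "C $$ (i,l) = 0" using C0 jq[of i] positive_exponents_kernel_dim(1) by (simp add: r_def)
  qed
qed

lemma pole_order_reduction:
  assumes sub: "ball z0 e \<subseteq> \<Omega>" and Y: "hol_mat \<Omega> n (kernel_dim (T z0)) Y"
    and indep: "\<forall>c\<in>carrier_vec (kernel_dim (T z0)). Y z0 *\<^sub>v c = 0\<^sub>v n \<longrightarrow> c = 0\<^sub>v (kernel_dim (T z0))"
    and H: "hol_mat (ball z0 e) n (kernel_dim (T z0)) H"
    and TY: "\<And>z. z \<in> ball z0 e \<Longrightarrow> T z * Y z = H z * mat_diag (kernel_dim (T z0)) (\<lambda>i. (z - z0) ^ m i)"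
    and V: "hol_mat \<Omega> (kernel_dim (T z0)) n V" and G: "hol_mat (ball z0 e) n n G"
    and GF: "\<And>z. z \<in> ball z0 e - {z0} \<Longrightarrow>
      (z - z0) ^ j \<cdot>\<^sub>m resid_fun T z0 (kernel_dim (T z0)) m Y V z = G z"
    and j: "1 \<le> j"
  shows "\<exists>Vt. hol_mat \<Omega> (kernel_dim (T z0)) n Vt \<and>
    pole_order_le n z0 (resid_fun T z0 (kernel_dim (T z0)) m Y Vt) (j - 1)"
proof -
  define r where "r = kernel_dim (T z0)"
  obtain C where C: "C \<in> carrier_mat r n" "Y z0 * C = G z0"
    and C0: "\<And>i l. i < r \<Longrightarrow> m i < j \<Longrightarrow> l < n \<Longrightarrow> C $$ (i,l) = 0"
    using pole_coefficient_exists[OF hol_mat_subset[OF Y sub] H hol_mat_subset[OF V sub] G indep TY GF j]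
    unfolding r_def by blast
  (* m i - j truncates at 0; this is harmless since the rows of C with m i < j vanish. *)
  define Vt where "Vt z = V z + mat r n (\<lambda>(i,l). (z - z0) ^ (m i - j) * C $$ (i,l))" for z
  have "hol_mat \<Omega> r n Vt"
    unfolding Vt_def r_def by (intro hol_mat_add V hol_mat_mat holomorphic_intros)
  moreover have "pole_order_le n z0 (resid_fun T z0 r m Y Vt) (j - 1)"
  proof (rule pole_order_le_cong[OF _ e_pos])
    show "pole_order_le n z0 (\<lambda>z. resid_fun T z0 r m Y V z - (1 / (z - z0) ^ j) \<cdot>\<^sub>m (Y z * C)) (j - 1)"
      using G hol_mat_mult[OF hol_mat_subset[OF Y sub] hol_mat_const[OF C(1)[unfolded r_def]]] C(2) GF
      by (intro pole_order_le_subtract_principal_part[OF e_pos j,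
            where F = "resid_fun T z0 r m Y V" and G = G]) (auto simp: r_def)
    show "resid_fun T z0 r m Y Vt z = resid_fun T z0 r m Y V z - (1 / (z - z0) ^ j) \<cdot>\<^sub>m (Y z * C)"
      if "z \<in> ball z0 e - {z0}" for z
      unfolding Vt_def using resid_fun_shift[OF C(1) _ C0 hol_matD(1)[OF Y[folded r_def]]
        hol_matD(1)[OF V[folded r_def]]] that
      by simp
  qed
  ultimately show ?thesis unfolding r_def by blast
qed

end

theorem mainTheorem17:
  fixes \<Omega> :: "complex set" and z0 :: complex and n j :: nat and m :: "nat \<Rightarrow> nat"
    and T Y V :: "complex \<Rightarrow> complex mat"
  assumes "open \<Omega>" and "z0 \<in> \<Omega>"
    and "hol_mat \<Omega> n n T"
    and "\<exists>z\<in>\<Omega>. det (T z) \<noteq> 0"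
    and "det (T z0) = 0"
    and "partial_multiplicities T z0 n m"
    and "right_canonical \<Omega> T z0 n m Y"
    and "hol_mat \<Omega> (kernel_dim (T z0)) n V"
    and "j \<ge> 1"
    and "pole_order_eq n z0 (resid_fun T z0 (kernel_dim (T z0)) m Y V) j"
  shows "\<exists>Vt. hol_mat \<Omega> (kernel_dim (T z0)) n Vt \<and>
           pole_order_le n z0 (resid_fun T z0 (kernel_dim (T z0)) m Y Vt) (j - 1)"
proof -
  note RC = right_canonicalD[OF assms(7)]
  obtain e UL UR where LS: "local_smith_form z0 e n m T UL UR" and sub: "ball z0 e \<subseteq> \<Omega>"
    using partial_multiplicities_local_smith_form[OF assms(1-3,6)] .
  obtain d H where d: "0 < d" "d \<le> e" and H: "hol_mat (ball z0 d) n (kernel_dim (T z0)) H"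
    and TY: "\<And>z. z \<in> ball z0 d \<Longrightarrow> T z * Y z = H z * mat_diag (kernel_dim (T z0)) (\<lambda>i. (z - z0) ^ m i)"
    using local_smith_form.right_canonical_factorization[OF LS assms(7) sub] by metis
  obtain e2 G where e2: "0 < e2" and G: "hol_mat (ball z0 e2) n n G"
    and GF: "\<And>z. z \<in> ball z0 e2 - {z0} \<Longrightarrow>
      (z - z0) ^ j \<cdot>\<^sub>m resid_fun T z0 (kernel_dim (T z0)) m Y V z = G z"
    using assms(10) unfolding pole_order_eq_def pole_order_le_def by blast
  define d' where "d' = min d e2"
  have d': "0 < d'" "d' \<le> e" and sub': "ball z0 d' \<subseteq> ball z0 d" "ball z0 d' \<subseteq> ball z0 e2"
    using d e2 by (auto simp: d'_def)
  have LS': "local_smith_form z0 d' n m T UL UR" by (rule local_smith_form_shrink[OF LS d'])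
  show ?thesis
    using sub' order_trans[OF subset_ball[OF d'(2)] sub] TY GF
    by (intro local_smith_form.pole_order_reduction[OF LS' _ RC(1,3) hol_mat_subset[OF H sub'(1)] _
          assms(8) hol_mat_subset[OF G sub'(2)] _ assms(9)]) auto
qed

end
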